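(* Let $f \in \mathcal{C}_{2\pi}$, let $A_n[f]$ be the Toeplitz matrix generated by $f$ and $c_n[f]$ the optimal circulant preconditioner for $A_n[f]$. For every $\epsilon>0$ there exist positive integers $N$ and $M$ such that for every $n>N$ there are matrices $\mathscr R_n[f],\mathscr E_n[f]\in\mathbb{C}^{n\times n}$ with \[ \cos c_n[f]-\cos A_n[f] = \mathscr R_n[f]+\mathscr E_n[f],\qquad \operatorname{rank}\mathscr R_n[f]\le 2M,\qquad \|\mathscr E_n[f]\|_2\le\epsilon. \]
   Context: $\mathcal{C}_{2\pi}$ denotes the Banach space of all $2\pi$-periodic continuous complex-valued functions on $\mathbb{R}$ with the supremum norm $\|\cdot\|_\infty$. For $f\in\mathcal{C}_{2\pi}$ its Fourier coefficients are $a_k=\frac{1}{2\pi}\int_{-\pi}^{\pi} f(\theta)e^{-\mathbf{i}k\theta}\,d\theta$, $k\in\mathbb{Z}$. The Toeplitz matrix generated by $f$ is the $n\times n$ matrix $A_n[f]$ whose $(j,k)$ entry is $a_{j-k}$. The optimal circulant preconditioner $c_n[f]$ is the $n\times n$ circulant matrix whose $(j,k)$ entry is $c_{(j-k)\bmod n}$, where $c_k=\frac{(n-k)a_k+k\,a_{k-n}}{n}$ for $0\le k<n$. For a square matrix $X$, $\cos X=\sum_{m\ge0}\frac{(-1)^m}{(2m)!}X^{2m}$. $\|\cdot\|_2$ is the spectral norm. *)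

theory Defs
  imports "HOL-Analysis.Analysis" "Jordan_Normal_Form.DL_Rank"
begin

definition fourier_coeff :: "(real \<Rightarrow> complex) \<Rightarrow> int \<Rightarrow> complex" where
  "fourier_coeff f k =
     integral {-pi..pi} (\<lambda>\<theta>. f \<theta> * exp (- \<i> * of_int k * of_real \<theta>)) / of_real (2 * pi)"

definition toeplitz_mat :: "(real \<Rightarrow> complex) \<Rightarrow> nat \<Rightarrow> complex mat" where
  "toeplitz_mat f n = mat n n (\<lambda>(j, k). fourier_coeff f (int j - int k))"

definition opt_circ_coeff :: "(real \<Rightarrow> complex) \<Rightarrow> nat \<Rightarrow> int \<Rightarrow> complex" where
  "opt_circ_coeff f n k =
     ((of_int (int n - k)) * fourier_coeff f k + of_int k * fourier_coeff f (k - int n)) / of_nat n"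

definition opt_circulant :: "(real \<Rightarrow> complex) \<Rightarrow> nat \<Rightarrow> complex mat" where
  "opt_circulant f n = mat n n (\<lambda>(j, k). opt_circ_coeff f n ((int j - int k) mod int n))"

definition mat_cos :: "complex mat \<Rightarrow> complex mat" where
  "mat_cos X = mat (dim_row X) (dim_col X)
     (\<lambda>(j, k). \<Sum>m. ((-1) ^ m / of_nat (fact (2 * m))) * ((X ^\<^sub>m (2 * m)) $$ (j, k)))"

definition vec_norm2 :: "complex vec \<Rightarrow> real" where
  "vec_norm2 v = sqrt (\<Sum>i<dim_vec v. (cmod (vec_index v i))\<^sup>2)"

definition spectral_norm :: "complex mat \<Rightarrow> real" where
  "spectral_norm A = Sup {vec_norm2 (A *\<^sub>v v) | v. v \<in> carrier_vec (dim_col A) \<and> vec_norm2 v \<le> 1}"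

definition mat_rank :: "complex mat \<Rightarrow> nat" where
  "mat_rank A = vec_space.rank (dim_row A) (A :: complex mat)"

end

(*
  Approximate f uniformly by a trigonometric polynomial q of degree M and put g = f - q.
  For q, the optimal circulant and the Toeplitz matrix agree outside the first and last M
  columns up to the banded matrix with entries -|d| a_d / n, so c_n[q] - A_n[q] is a matrix of
  rank at most 2M plus a term of norm O(1/n). For g, both matrices have norm at most sup |g|:
  A_n[g] is a compression of multiplication by g (Parseval), and c_n[g] is an average of
  cyclic conjugates of A_n[g]. Hence X = c_n[f] and Y = A_n[f] are bounded by sup |f| and
  X - Y is low rank plus small. The identity X^k - Y^k = (X^(k-1) - Y^(k-1)) X + Y^(k-1) (X - Y)
  propagates this splitting to every power, and truncating the cosine series after K terms,
  with an error independent of n, finishes the proof.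
*)
theory Submission
  imports Defs
begin

lemma vec_norm2_eq_L2_set: "vec_norm2 v = L2_set (\<lambda>i. cmod (v $ i)) {..<dim_vec v}"
  by (simp add: vec_norm2_def L2_set_def)

lemma vec_norm2_nonneg: "vec_norm2 v \<ge> 0"
  by (simp add: vec_norm2_def sum_nonneg)

lemma vec_norm2_zero [simp]: "vec_norm2 (0\<^sub>v n) = 0"
  by (simp add: vec_norm2_def)

lemma vec_norm2_add_le:
  assumes "dim_vec w = dim_vec u"
  shows "vec_norm2 (u + w) \<le> vec_norm2 u + vec_norm2 w"
proof -
  have "vec_norm2 (u + w) = L2_set (\<lambda>i. cmod (u $ i + w $ i)) {..<dim_vec u}"
    unfolding vec_norm2_eq_L2_set using assms by (intro L2_set_cong) auto
  also have "\<dots> \<le> L2_set (\<lambda>i. cmod (u $ i) + cmod (w $ i)) {..<dim_vec u}"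
    by (intro L2_set_mono norm_triangle_ineq) auto
  also have "\<dots> \<le> L2_set (\<lambda>i. cmod (u $ i)) {..<dim_vec u} + L2_set (\<lambda>i. cmod (w $ i)) {..<dim_vec u}"
    by (rule L2_set_triangle_ineq)
  finally show ?thesis unfolding vec_norm2_eq_L2_set using assms by simp
qed

lemma vec_norm2_smult: "vec_norm2 (c \<cdot>\<^sub>v u) = cmod c * vec_norm2 u"
proof -
  have "vec_norm2 (c \<cdot>\<^sub>v u) = L2_set (\<lambda>i. cmod c * cmod (u $ i)) {..<dim_vec u}"
    unfolding vec_norm2_eq_L2_set by (intro L2_set_cong) (auto simp: norm_mult)
  then show ?thesis unfolding vec_norm2_eq_L2_set by (simp add: L2_set_right_distrib)
qed

lemma vec_norm2_unit_vec: "j < n \<Longrightarrow> vec_norm2 (unit_vec n j :: complex vec) = 1"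
proof -
  assume j: "j < n"
  have "(\<Sum>i<n. (cmod ((unit_vec n j :: complex vec) $ i))\<^sup>2) = (\<Sum>i<n. if i = j then 1 else 0)"
    by (intro sum.cong) (auto simp: unit_vec_def)
  also have "\<dots> = 1" using j by simp
  finally show ?thesis by (simp add: vec_norm2_def)
qed

lemma norm_vec_index_le_vec_norm2: "i < dim_vec w \<Longrightarrow> cmod (w $ i) \<le> vec_norm2 w"
  unfolding vec_norm2_eq_L2_set by (rule member_le_L2_set) auto

definition mat_bounded :: "nat \<Rightarrow> complex mat \<Rightarrow> real \<Rightarrow> bool" where
  "mat_bounded n X c \<longleftrightarrow>
     X \<in> carrier_mat n n \<and> (\<forall>v\<in>carrier_vec n. vec_norm2 (X *\<^sub>v v) \<le> c * vec_norm2 v)"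

lemma mat_boundedI:
  "X \<in> carrier_mat n n \<Longrightarrow> (\<And>v. v \<in> carrier_vec n \<Longrightarrow> vec_norm2 (X *\<^sub>v v) \<le> c * vec_norm2 v) \<Longrightarrow>
   mat_bounded n X c"
  by (auto simp: mat_bounded_def)

lemma mat_boundedD: "mat_bounded n X c \<Longrightarrow> v \<in> carrier_vec n \<Longrightarrow> vec_norm2 (X *\<^sub>v v) \<le> c * vec_norm2 v"
  and mat_bounded_carrier: "mat_bounded n X c \<Longrightarrow> X \<in> carrier_mat n n"
  by (auto simp: mat_bounded_def)

lemma mat_bounded_mono: "mat_bounded n X c \<Longrightarrow> c \<le> d \<Longrightarrow> mat_bounded n X d"
  unfolding mat_bounded_def by (meson mult_right_mono order.trans vec_norm2_nonneg)

lemma mat_bounded_zero: "mat_bounded n (0\<^sub>m n n) 0"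
proof (rule mat_boundedI)
  fix v :: "complex vec" assume "v \<in> carrier_vec n"
  then have "0\<^sub>m n n *\<^sub>v v = 0\<^sub>v n" by (intro eq_vecI) (auto simp: scalar_prod_def)
  then show "vec_norm2 (0\<^sub>m n n *\<^sub>v v) \<le> 0 * vec_norm2 v" by simp
qed simp

lemma mat_bounded_one: "mat_bounded n (1\<^sub>m n) 1"
  by (rule mat_boundedI) auto

lemma mat_bounded_add:
  assumes "mat_bounded n X a" "mat_bounded n Y b"
  shows "mat_bounded n (X + Y) (a + b)"
proof (rule mat_boundedI)
  have X: "X \<in> carrier_mat n n" and Y: "Y \<in> carrier_mat n n" using assms mat_bounded_carrier by auto
  then show "X + Y \<in> carrier_mat n n" by auto
  fix v :: "complex vec" assume v: "v \<in> carrier_vec n"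
  have "(X + Y) *\<^sub>v v = X *\<^sub>v v + Y *\<^sub>v v" using X Y v by (simp add: add_mult_distrib_mat_vec)
  also have "vec_norm2 \<dots> \<le> vec_norm2 (X *\<^sub>v v) + vec_norm2 (Y *\<^sub>v v)"
    using X Y by (intro vec_norm2_add_le) auto
  also have "\<dots> \<le> a * vec_norm2 v + b * vec_norm2 v" using assms v by (intro add_mono mat_boundedD)
  finally show "vec_norm2 ((X + Y) *\<^sub>v v) \<le> (a + b) * vec_norm2 v" by (simp add: algebra_simps)
qed

lemma mat_bounded_smult:
  assumes "mat_bounded n X a"
  shows "mat_bounded n (c \<cdot>\<^sub>m X) (cmod c * a)"
proof (rule mat_boundedI)
  have X: "X \<in> carrier_mat n n" using assms mat_bounded_carrier by auto
  then show "c \<cdot>\<^sub>m X \<in> carrier_mat n n" by auto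
  fix v :: "complex vec" assume v: "v \<in> carrier_vec n"
  have "(c \<cdot>\<^sub>m X) *\<^sub>v v = c \<cdot>\<^sub>v (X *\<^sub>v v)"
    using X v by (intro eq_vecI) (auto simp: scalar_prod_def sum_distrib_left mult.assoc)
  then have "vec_norm2 ((c \<cdot>\<^sub>m X) *\<^sub>v v) = cmod c * vec_norm2 (X *\<^sub>v v)" by (simp add: vec_norm2_smult)
  also have "\<dots> \<le> cmod c * (a * vec_norm2 v)" using assms v by (intro mult_left_mono mat_boundedD) auto
  finally show "vec_norm2 ((c \<cdot>\<^sub>m X) *\<^sub>v v) \<le> cmod c * a * vec_norm2 v" by simp
qed

lemma mat_bounded_minus:
  assumes "mat_bounded n X a" "mat_bounded n Y b"
  shows "mat_bounded n (X - Y) (a + b)"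
proof -
  have X: "X \<in> carrier_mat n n" and Y: "Y \<in> carrier_mat n n" using assms mat_bounded_carrier by auto
  have "X - Y = X + (-1) \<cdot>\<^sub>m Y" using X Y by (intro eq_matI) auto
  then show ?thesis using mat_bounded_add[OF assms(1) mat_bounded_smult[OF assms(2), of "-1"]] by simp
qed

lemma mat_bounded_mult:
  assumes "mat_bounded n X a" "mat_bounded n Y b" "a \<ge> 0"
  shows "mat_bounded n (X * Y) (a * b)"
proof (rule mat_boundedI)
  have X: "X \<in> carrier_mat n n" and Y: "Y \<in> carrier_mat n n" using assms mat_bounded_carrier by auto
  then show "X * Y \<in> carrier_mat n n" by auto
  fix v :: "complex vec" assume v: "v \<in> carrier_vec n"
  have "(X * Y) *\<^sub>v v = X *\<^sub>v (Y *\<^sub>v v)" using X Y v by simp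
  also have "vec_norm2 \<dots> \<le> a * vec_norm2 (Y *\<^sub>v v)" using assms(1) Y v by (intro mat_boundedD) auto
  also have "\<dots> \<le> a * (b * vec_norm2 v)" using assms(2,3) v by (intro mult_left_mono mat_boundedD)
  finally show "vec_norm2 ((X * Y) *\<^sub>v v) \<le> a * b * vec_norm2 v" by simp
qed

lemma mat_bounded_pow:
  assumes "mat_bounded n X a" "a \<ge> 0"
  shows "mat_bounded n (X ^\<^sub>m k) (a ^ k)"
proof (induction k)
  case 0
  show ?case using mat_bounded_one mat_bounded_carrier[OF assms(1)] by simp
next
  case (Suc k)
  show ?case using mat_bounded_mult[OF Suc assms(1)] assms(2) by (simp add: mult.commute)
qed

lemma norm_index_le_if_mat_bounded:
  assumes "mat_bounded n X \<rho>" "i < n" "j < n"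
  shows "cmod (X $$ (i, j)) \<le> \<rho>"
proof -
  have X: "X \<in> carrier_mat n n" using assms mat_bounded_carrier by auto
  have "(X *\<^sub>v unit_vec n j) $ i = X $$ (i, j)"
    using X assms by (simp add: scalar_prod_def unit_vec_def if_distrib cong: if_cong)
  then have "cmod (X $$ (i, j)) \<le> vec_norm2 (X *\<^sub>v unit_vec n j)"
    using X assms norm_vec_index_le_vec_norm2[of i "X *\<^sub>v unit_vec n j"] by simp
  also have "\<dots> \<le> \<rho> * vec_norm2 (unit_vec n j :: complex vec)" using assms by (intro mat_boundedD) auto
  finally show ?thesis using vec_norm2_unit_vec assms by simp
qed

lemma spectral_norm_le_if_mat_bounded:
  assumes "mat_bounded n E c" "c \<ge> 0"
  shows "spectral_norm E \<le> c"
  unfolding spectral_norm_def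
proof (rule cSup_least)
  have E: "E \<in> carrier_mat n n" using assms mat_bounded_carrier by auto
  have "E *\<^sub>v 0\<^sub>v n = 0\<^sub>v n" using E by (intro eq_vecI) (auto simp: scalar_prod_def)
  then show "{vec_norm2 (E *\<^sub>v v) |v. v \<in> carrier_vec (dim_col E) \<and> vec_norm2 v \<le> 1} \<noteq> {}"
    using E by (auto intro!: exI[of _ "0\<^sub>v n"])
  fix x assume "x \<in> {vec_norm2 (E *\<^sub>v v) |v. v \<in> carrier_vec (dim_col E) \<and> vec_norm2 v \<le> 1}"
  then obtain v where v: "v \<in> carrier_vec n" "vec_norm2 v \<le> 1" and x: "x = vec_norm2 (E *\<^sub>v v)"
    using E by auto
  have "x \<le> c * vec_norm2 v" using mat_boundedD[OF assms(1) v(1)] x by simp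
  also have "\<dots> \<le> c" using v(2) assms(2) by (simp add: mult_left_le)
  finally show "x \<le> c" .
qed

lemma mat_bounded_matI:
  assumes "\<And>v. v \<in> carrier_vec n \<Longrightarrow>
     L2_set (\<lambda>j. cmod (\<Sum>k<n. F (j, k) * v $ k)) {..<n} \<le> c * L2_set (\<lambda>k. cmod (v $ k)) {..<n}"
  shows "mat_bounded n (mat n n F) c"
proof (rule mat_boundedI)
  fix v :: "complex vec" assume v: "v \<in> carrier_vec n"
  have "vec_norm2 (mat n n F *\<^sub>v v) = L2_set (\<lambda>j. cmod (\<Sum>k<n. F (j, k) * v $ k)) {..<n}"
    unfolding vec_norm2_eq_L2_set using v by (intro L2_set_cong) (auto simp: scalar_prod_def atLeast0LessThan)
  also have "\<dots> \<le> c * vec_norm2 v" using assms v by (simp add: vec_norm2_eq_L2_set)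
  finally show "vec_norm2 (mat n n F *\<^sub>v v) \<le> c * vec_norm2 v" .
qed simp

subsection \<open>Sums of rank-one matrices\<close>

text \<open>Low rank is tracked through explicit sums of outer products rather than through \<open>mat_rank\<close>,
  because this class is visibly closed under multiplication by arbitrary matrices on either side.\<close>

fun rank_one_sum :: "nat \<Rightarrow> nat \<Rightarrow> complex mat \<Rightarrow> bool" where
  "rank_one_sum n 0 Z \<longleftrightarrow> Z = 0\<^sub>m n n"
| "rank_one_sum n (Suc k) Z \<longleftrightarrow>
     (\<exists>u w Z'. rank_one_sum n k Z' \<and> Z = mat n n (\<lambda>(r, c). u r * w c) + Z')"

lemma rank_one_sum_carrier: "rank_one_sum n k Z \<Longrightarrow> Z \<in> carrier_mat n n"
  by (induction k arbitrary: Z) auto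

lemma rank_one_sum_SucI:
  "rank_one_sum n k Z' \<Longrightarrow> Z = mat n n (\<lambda>(r, c). u r * w c) + Z' \<Longrightarrow> rank_one_sum n (Suc k) Z"
  by auto

lemma rank_one_sum_add:
  "rank_one_sum n a Z1 \<Longrightarrow> rank_one_sum n b Z2 \<Longrightarrow> rank_one_sum n (a + b) (Z1 + Z2)"
proof (induction a arbitrary: Z1)
  case 0
  then show ?case using rank_one_sum_carrier[OF 0(2)] by simp
next
  case (Suc a)
  then obtain u w Z' where Z': "rank_one_sum n a Z'" "Z1 = mat n n (\<lambda>(r, c). u r * w c) + Z'" by auto
  have "Z1 + Z2 = mat n n (\<lambda>(r, c). u r * w c) + (Z' + Z2)"
    using Z' rank_one_sum_carrier[OF Z'(1)] rank_one_sum_carrier[OF Suc(3)] by (intro eq_matI) auto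
  then show ?case using Suc.IH[OF Z'(1) Suc(3)] by auto
qed

lemma rank_one_sum_zero: "rank_one_sum n k (0\<^sub>m n n)"
proof (induction k)
  case (Suc k)
  have "0\<^sub>m n n = mat n n (\<lambda>(r, c). (\<lambda>_. 0) r * (\<lambda>_. 0::complex) c) + 0\<^sub>m n n"
    by (intro eq_matI) auto
  then show ?case by (rule rank_one_sum_SucI[OF Suc])
qed simp

lemma rank_one_sum_mono: "rank_one_sum n a Z \<Longrightarrow> a \<le> b \<Longrightarrow> rank_one_sum n b Z"
  using rank_one_sum_add[OF _ rank_one_sum_zero, of n a Z "b - a"] rank_one_sum_carrier[of n a Z]
  by simp

lemma rank_one_sum_mult_left:
  "X \<in> carrier_mat n n \<Longrightarrow> rank_one_sum n k Z \<Longrightarrow> rank_one_sum n k (X * Z)"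
proof (induction k arbitrary: Z)
  case (Suc k)
  then obtain u w Z' where Z': "rank_one_sum n k Z'" "Z = mat n n (\<lambda>(r, c). u r * w c) + Z'" by auto
  have "X * Z = X * mat n n (\<lambda>(r, c). u r * w c) + X * Z'"
    unfolding Z'(2) by (rule mult_add_distrib_mat[OF Suc(2) mat_carrier rank_one_sum_carrier[OF Z'(1)]])
  also have "X * mat n n (\<lambda>(r, c). u r * w c) = mat n n (\<lambda>(r, c). (\<Sum>i<n. X $$ (r, i) * u i) * w c)"
    using Suc(2) by (intro eq_matI)
      (auto simp: scalar_prod_def sum_distrib_right mult.assoc intro!: sum.cong)
  finally show ?case by (rule rank_one_sum_SucI[OF Suc.IH[OF Suc(2) Z'(1)]])
qed simp

lemma rank_one_sum_mult_right:
  "X \<in> carrier_mat n n \<Longrightarrow> rank_one_sum n k Z \<Longrightarrow> rank_one_sum n k (Z * X)"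
proof (induction k arbitrary: Z)
  case (Suc k)
  then obtain u w Z' where Z': "rank_one_sum n k Z'" "Z = mat n n (\<lambda>(r, c). u r * w c) + Z'" by auto
  have "Z * X = mat n n (\<lambda>(r, c). u r * w c) * X + Z' * X"
    unfolding Z'(2) by (rule add_mult_distrib_mat[OF mat_carrier rank_one_sum_carrier[OF Z'(1)] Suc(2)])
  also have "mat n n (\<lambda>(r, c). u r * w c) * X = mat n n (\<lambda>(r, c). u r * (\<Sum>i<n. w i * X $$ (i, c)))"
    using Suc(2) by (intro eq_matI)
      (auto simp: scalar_prod_def sum_distrib_left mult.assoc intro!: sum.cong)
  finally show ?case by (rule rank_one_sum_SucI[OF Suc.IH[OF Suc(2) Z'(1)]])
qed simp

lemma rank_one_sum_smult: "rank_one_sum n k Z \<Longrightarrow> rank_one_sum n k (a \<cdot>\<^sub>m Z)"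
proof (induction k arbitrary: Z)
  case (Suc k)
  then obtain u w Z' where Z': "rank_one_sum n k Z'" "Z = mat n n (\<lambda>(r, c). u r * w c) + Z'" by auto
  have "a \<cdot>\<^sub>m Z = mat n n (\<lambda>(r, c). (\<lambda>r. a * u r) r * w c) + a \<cdot>\<^sub>m Z'"
    using Z' rank_one_sum_carrier[OF Z'(1)] by (intro eq_matI) (auto simp: algebra_simps)
  then show ?case by (rule rank_one_sum_SucI[OF Suc.IH[OF Z'(1)]])
qed simp

lemma mat_rank_le_if_rank_one_sum: "rank_one_sum n k Z \<Longrightarrow> mat_rank Z \<le> k"
proof (induction k arbitrary: Z)
  case 0
  then show ?case by (simp add: mat_rank_def vec_space.rank_0I)
next
  case (Suc k)
  then obtain u w Z' where Z': "rank_one_sum n k Z'" "Z = mat n n (\<lambda>(r, c). u r * w c) + Z'" by auto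
  have C: "Z' \<in> carrier_mat n n" using rank_one_sum_carrier[OF Z'(1)] .
  have "mat_rank Z = vec_space.rank n (mat n n (\<lambda>(r, c). u r * w c) + Z')"
    using Z' C by (simp add: mat_rank_def)
  also have "\<dots> \<le> vec_space.rank n (mat n n (\<lambda>(r, c). u r * w c)) + vec_space.rank n Z'"
    using C by (intro vec_space.rank_subadditive) auto
  also have "vec_space.rank n (mat n n (\<lambda>(r, c). u r * w c)) \<le> 1"
    by (rule vec_space.rank_le_1_product_entries[where f=u and g=w]) auto
  also have "vec_space.rank n Z' \<le> k" using Suc.IH[OF Z'(1)] C by (simp add: mat_rank_def)
  finally show ?case by simp
qed

lemma rank_one_sum_column_mask:
  "finite S \<Longrightarrow> rank_one_sum n (card S) (mat n n (\<lambda>(j, k). if k \<in> S then F j k else 0))"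
proof (induction S rule: finite_induct)
  case empty
  show ?case by (auto intro!: eq_matI)
next
  case (insert a S)
  have "mat n n (\<lambda>(j, k). if k \<in> insert a S then F j k else 0) =
     mat n n (\<lambda>(r, c). (\<lambda>j. F j a) r * (\<lambda>k. if k = a then 1 else 0) c) +
     mat n n (\<lambda>(j, k). if k \<in> S then F j k else 0)"
    using insert by (intro eq_matI) auto
  then show ?case using rank_one_sum_SucI[OF insert(3)] insert(1,2) by simp
qed

subsection \<open>Low-rank plus small perturbations of powers and of the cosine\<close>

lemma mat_mult_minus_mat_mult:
  fixes A B X Y :: "complex mat"
  assumes "A \<in> carrier_mat n n" "B \<in> carrier_mat n n" "X \<in> carrier_mat n n" "Y \<in> carrier_mat n n"
  shows "A * X - B * Y = (A - B) * X + B * (X - Y)"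
proof -
  have "(A - B) * X + B * (X - Y) = (A * X - B * X) + (B * X - B * Y)"
    using minus_mult_distrib_mat[OF assms(1,2,3)] mult_minus_distrib_mat[OF assms(2,3,4)] by simp
  also have "\<dots> = A * X - B * Y" using assms by (intro eq_matI) auto
  finally show ?thesis by simp
qed

lemma mat_pow_diff_decomp:
  assumes X: "mat_bounded n X \<rho>" and Y: "mat_bounded n Y \<rho>" and rho: "\<rho> \<ge> 0"
    and D: "X - Y = R + E" and R: "rank_one_sum n r R" and E: "mat_bounded n E e" and e: "e \<ge> 0"
  shows "\<exists>R' E'. X ^\<^sub>m k - Y ^\<^sub>m k = R' + E' \<and> rank_one_sum n (k * r) R' \<and>
                 mat_bounded n E' (real k * \<rho> ^ (k - 1) * e)"
proof (induction k)
  case 0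
  have "X ^\<^sub>m 0 - Y ^\<^sub>m 0 = 0\<^sub>m n n + 0\<^sub>m n n"
    using mat_bounded_carrier[OF X] mat_bounded_carrier[OF Y] by (intro eq_matI) auto
  then show ?case using rank_one_sum_zero mat_bounded_zero by fastforce
next
  case (Suc k)
  then obtain R' E' where H: "X ^\<^sub>m k - Y ^\<^sub>m k = R' + E'" "rank_one_sum n (k * r) R'"
      "mat_bounded n E' (real k * \<rho> ^ (k - 1) * e)"
    by auto
  have Xc: "X \<in> carrier_mat n n" and Yk: "Y ^\<^sub>m k \<in> carrier_mat n n"
    using mat_bounded_carrier[OF X] mat_bounded_carrier[OF Y] by auto
  have carriers: "R' \<in> carrier_mat n n" "E' \<in> carrier_mat n n" "R \<in> carrier_mat n n" "E \<in> carrier_mat n n"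
    using rank_one_sum_carrier H mat_bounded_carrier R E by auto
  have "X ^\<^sub>m Suc k - Y ^\<^sub>m Suc k = (X ^\<^sub>m k - Y ^\<^sub>m k) * X + Y ^\<^sub>m k * (X - Y)"
    using mat_mult_minus_mat_mult[of "X ^\<^sub>m k" n "Y ^\<^sub>m k" X Y] Xc Yk mat_bounded_carrier[OF Y]
    by simp
  also have "\<dots> = (R' * X + Y ^\<^sub>m k * R) + (E' * X + Y ^\<^sub>m k * E)"
    unfolding H(1) D using carriers Xc Yk
    by (simp add: add_mult_distrib_mat mult_add_distrib_mat) (intro eq_matI; auto)
  finally have eq: "X ^\<^sub>m Suc k - Y ^\<^sub>m Suc k = (R' * X + Y ^\<^sub>m k * R) + (E' * X + Y ^\<^sub>m k * E)" .
  have "rank_one_sum n (k * r + r) (R' * X + Y ^\<^sub>m k * R)"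
    using rank_one_sum_add rank_one_sum_mult_right[OF Xc H(2)] rank_one_sum_mult_left[OF Yk R] by blast
  moreover have "mat_bounded n (E' * X + Y ^\<^sub>m k * E) (real k * \<rho> ^ (k - 1) * e * \<rho> + \<rho> ^ k * e)"
    using mat_bounded_add[OF mat_bounded_mult[OF H(3) X] mat_bounded_mult[OF mat_bounded_pow[OF Y rho] E]]
      rho e by simp
  moreover have "real k * \<rho> ^ (k - 1) * e * \<rho> + \<rho> ^ k * e = real (Suc k) * \<rho> ^ (Suc k - 1) * e"
    by (cases k) (auto simp: algebra_simps)
  ultimately show ?case using eq by (auto simp: add.commute)
qed

definition cos_coeff :: "nat \<Rightarrow> complex" where
  "cos_coeff m = (-1) ^ m / of_nat (fact (2 * m))"

definition cos_majorant :: "real \<Rightarrow> nat \<Rightarrow> real" where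
  "cos_majorant \<rho> m = \<rho> ^ (2 * m) / fact (2 * m)"

fun cos_partial :: "nat \<Rightarrow> complex mat \<Rightarrow> nat \<Rightarrow> complex mat" where
  "cos_partial n X 0 = 0\<^sub>m n n"
| "cos_partial n X (Suc K) = cos_partial n X K + cos_coeff K \<cdot>\<^sub>m (X ^\<^sub>m (2 * K))"

lemma norm_cos_coeff: "cmod (cos_coeff m) = 1 / fact (2 * m)"
  by (simp add: cos_coeff_def norm_divide norm_power)

lemma cos_majorant_nonneg: "\<rho> \<ge> 0 \<Longrightarrow> cos_majorant \<rho> m \<ge> 0"
  by (simp add: cos_majorant_def)

lemma summable_cos_majorant: "\<rho> \<ge> 0 \<Longrightarrow> summable (cos_majorant \<rho>)"
proof -
  assume r: "\<rho> \<ge> 0"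
  have "summable (\<lambda>m. inverse (fact m) * (\<rho>\<^sup>2) ^ m :: real)" by (rule summable_exp)
  then show ?thesis
  proof (rule summable_comparison_test')
    fix m :: nat
    have "fact m \<le> (fact (2 * m) :: real)" by (intro fact_mono) auto
    then have "\<rho> ^ (2 * m) / fact (2 * m) \<le> (\<rho>\<^sup>2) ^ m / fact m"
      using r by (simp add: power_mult divide_left_mono)
    then show "norm (cos_majorant \<rho> m) \<le> inverse (fact m) * (\<rho>\<^sup>2) ^ m"
      using r by (simp add: cos_majorant_def divide_inverse mult.commute)
  qed
qed

lemma cos_partial_carrier: "X \<in> carrier_mat n n \<Longrightarrow> cos_partial n X K \<in> carrier_mat n n"
  by (induction K) auto

lemma index_cos_partial:
  "X \<in> carrier_mat n n \<Longrightarrow> i < n \<Longrightarrow> j < n \<Longrightarrow>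
   cos_partial n X K $$ (i, j) = (\<Sum>m<K. cos_coeff m * (X ^\<^sub>m (2 * m)) $$ (i, j))"
  by (induction K) (auto simp: cos_partial_carrier)

lemma index_mat_cos:
  "X \<in> carrier_mat n n \<Longrightarrow> i < n \<Longrightarrow> j < n \<Longrightarrow>
   mat_cos X $$ (i, j) = (\<Sum>m. cos_coeff m * (X ^\<^sub>m (2 * m)) $$ (i, j))"
  by (simp add: mat_cos_def cos_coeff_def)

lemma mat_cos_carrier: "X \<in> carrier_mat n n \<Longrightarrow> mat_cos X \<in> carrier_mat n n"
  by (simp add: mat_cos_def)

lemma summable_mat_cos_entry:
  assumes "mat_bounded n X \<rho>" "\<rho> \<ge> 0" "i < n" "j < n"
  shows "summable (\<lambda>m. cos_coeff m * (X ^\<^sub>m (2 * m)) $$ (i, j))"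
proof (rule summable_norm_cancel, rule summable_comparison_test'[OF summable_cos_majorant[OF assms(2)]])
  fix m
  have "cmod ((X ^\<^sub>m (2 * m)) $$ (i, j)) \<le> \<rho> ^ (2 * m)"
    using norm_index_le_if_mat_bounded[OF mat_bounded_pow[OF assms(1,2)] assms(3,4)] .
  then show "norm (cmod (cos_coeff m * (X ^\<^sub>m (2 * m)) $$ (i, j))) \<le> cos_majorant \<rho> m"
    unfolding norm_mult norm_cos_coeff cos_majorant_def by (simp add: divide_right_mono)
qed

lemma mat_bounded_cos_partial_diff:
  assumes "mat_bounded n X \<rho>" "\<rho> \<ge> 0"
  shows "mat_bounded n (cos_partial n X (K + L) - cos_partial n X K) (\<Sum>m\<in>{K..<K+L}. cos_majorant \<rho> m)"
proof (induction L)
  case 0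
  have "cos_partial n X (K + 0) - cos_partial n X K = 0\<^sub>m n n"
    using cos_partial_carrier[OF mat_bounded_carrier[OF assms(1)], of K] by (intro eq_matI) auto
  then show ?case using mat_bounded_zero by simp
next
  case (Suc L)
  have X: "X \<in> carrier_mat n n" using assms mat_bounded_carrier by auto
  have "cos_partial n X (K + Suc L) - cos_partial n X K =
      (cos_partial n X (K + L) - cos_partial n X K) + cos_coeff (K + L) \<cdot>\<^sub>m (X ^\<^sub>m (2 * (K + L)))"
    using cos_partial_carrier[OF X, of "K + L"] cos_partial_carrier[OF X, of K] carrier_matD[OF X]
      pow_carrier_mat[OF X, of "2 * (K + L)"]
    by (intro eq_matI) auto
  moreover have "mat_bounded n (cos_coeff (K + L) \<cdot>\<^sub>m (X ^\<^sub>m (2 * (K + L)))) (cos_majorant \<rho> (K + L))"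
    using mat_bounded_smult[OF mat_bounded_pow[OF assms, of "2 * (K + L)"], of "cos_coeff (K + L)"]
    by (simp add: norm_cos_coeff cos_majorant_def)
  ultimately show ?case using mat_bounded_add[OF Suc] by simp
qed

lemma mat_bounded_limit:
  assumes bnd: "\<And>L. mat_bounded n (D L) c" and T: "T \<in> carrier_mat n n"
    and lim: "\<And>i j. i < n \<Longrightarrow> j < n \<Longrightarrow> (\<lambda>L. D L $$ (i, j)) \<longlonglongrightarrow> T $$ (i, j)"
  shows "mat_bounded n T c"
proof (rule mat_boundedI[OF T])
  fix v :: "complex vec" assume v: "v \<in> carrier_vec n"
  have D: "D L \<in> carrier_mat n n" for L using mat_bounded_carrier[OF bnd] .
  have "(\<lambda>L. (D L *\<^sub>v v) $ i) \<longlonglongrightarrow> (T *\<^sub>v v) $ i" if i: "i < n" for i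
  proof -
    have "(\<lambda>L. \<Sum>j<n. D L $$ (i, j) * v $ j) \<longlonglongrightarrow> (\<Sum>j<n. T $$ (i, j) * v $ j)"
      using lim i by (intro tendsto_sum tendsto_mult tendsto_const) auto
    moreover have "(D L *\<^sub>v v) $ i = (\<Sum>j<n. D L $$ (i, j) * v $ j)" for L
      using i D[of L] v by (simp add: scalar_prod_def atLeast0LessThan)
    ultimately show ?thesis using i T v by (simp add: scalar_prod_def atLeast0LessThan)
  qed
  then have "(\<lambda>L. sqrt (\<Sum>i<n. (cmod ((D L *\<^sub>v v) $ i))\<^sup>2)) \<longlonglongrightarrow> sqrt (\<Sum>i<n. (cmod ((T *\<^sub>v v) $ i))\<^sup>2)"
    by (intro tendsto_intros) auto
  moreover have "vec_norm2 (D L *\<^sub>v v) = sqrt (\<Sum>i<n. (cmod ((D L *\<^sub>v v) $ i))\<^sup>2)" for L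
    using D[of L] unfolding vec_norm2_def by simp
  ultimately have "(\<lambda>L. vec_norm2 (D L *\<^sub>v v)) \<longlonglongrightarrow> vec_norm2 (T *\<^sub>v v)"
    using T unfolding vec_norm2_def by simp
  then show "vec_norm2 (T *\<^sub>v v) \<le> c * vec_norm2 v"
    using mat_boundedD[OF bnd v] by (intro LIMSEQ_le_const2) auto
qed

lemma mat_bounded_mat_cos_tail:
  assumes X: "mat_bounded n X \<rho>" and rho: "\<rho> \<ge> 0"
  shows "mat_bounded n (mat_cos X - cos_partial n X K) (\<Sum>i. cos_majorant \<rho> (i + K))"
proof (rule mat_bounded_limit)
  have Xc: "X \<in> carrier_mat n n" using mat_bounded_carrier[OF X] .
  show "mat_cos X - cos_partial n X K \<in> carrier_mat n n"
    by (rule minus_carrier_mat[OF cos_partial_carrier[OF Xc]])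
  fix L
  have "summable (\<lambda>i. cos_majorant \<rho> (i + K))"
    using summable_cos_majorant[OF rho] by (simp add: summable_iff_shift)
  then have "(\<Sum>i<L. cos_majorant \<rho> (i + K)) \<le> (\<Sum>i. cos_majorant \<rho> (i + K))"
    by (intro sum_le_suminf) (auto intro: cos_majorant_nonneg[OF rho])
  moreover have "(\<Sum>m\<in>{K..<K+L}. cos_majorant \<rho> m) = (\<Sum>i<L. cos_majorant \<rho> (i + K))"
    by (rule sum.reindex_bij_witness[of _ "\<lambda>i. i + K" "\<lambda>m. m - K"]) auto
  ultimately show "mat_bounded n (cos_partial n X (K + L) - cos_partial n X K) (\<Sum>i. cos_majorant \<rho> (i + K))"
    using mat_bounded_mono[OF mat_bounded_cos_partial_diff[OF X rho]] by simp
next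
  fix i j assume ij: "i < n" "j < n"
  have Xc: "X \<in> carrier_mat n n" using mat_bounded_carrier[OF X] .
  have "(\<lambda>N. \<Sum>m<N. cos_coeff m * (X ^\<^sub>m (2 * m)) $$ (i, j)) \<longlonglongrightarrow> mat_cos X $$ (i, j)"
    using summable_LIMSEQ[OF summable_mat_cos_entry[OF X rho ij]] index_mat_cos[OF Xc ij] by simp
  then have "(\<lambda>L. cos_partial n X (L + K) $$ (i, j)) \<longlonglongrightarrow> mat_cos X $$ (i, j)"
    using LIMSEQ_ignore_initial_segment index_cos_partial[OF Xc ij] by simp
  then have "(\<lambda>L. cos_partial n X (K + L) $$ (i, j) - cos_partial n X K $$ (i, j))
      \<longlonglongrightarrow> mat_cos X $$ (i, j) - cos_partial n X K $$ (i, j)"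
    by (intro tendsto_diff) (simp_all add: add.commute)
  then show "(\<lambda>L. (cos_partial n X (K + L) - cos_partial n X K) $$ (i, j))
      \<longlonglongrightarrow> (mat_cos X - cos_partial n X K) $$ (i, j)"
    using cos_partial_carrier[OF Xc, of K] mat_cos_carrier[OF Xc] ij by simp
qed

lemma of_nat_mult_power_diff_le:
  assumes "\<rho> \<ge> 0"
  shows "real k * \<rho> ^ (k - 1) \<le> (2 + 2 * \<rho>) ^ k"
proof -
  have "real k \<le> 2 ^ k" using less_exp[of k] by (metis of_nat_le_iff of_nat_numeral of_nat_power less_imp_le)
  moreover have "\<rho> ^ (k - 1) \<le> (1 + \<rho>) ^ k"
  proof -
    have "\<rho> ^ (k - 1) \<le> (1 + \<rho>) ^ (k - 1)" using assms by (intro power_mono) auto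
    also have "\<dots> \<le> (1 + \<rho>) ^ k" using assms by (intro power_increasing) auto
    finally show ?thesis .
  qed
  ultimately have "real k * \<rho> ^ (k - 1) \<le> 2 ^ k * (1 + \<rho>) ^ k"
    using assms by (intro mult_mono) auto
  also have "\<dots> = (2 + 2 * \<rho>) ^ k" by (simp add: power_mult_distrib[symmetric] algebra_simps)
  finally show ?thesis .
qed

lemma norm_cos_coeff_mult_le:
  assumes "\<rho> \<ge> 0" "e \<ge> 0"
  shows "cmod (cos_coeff K) * (real (2 * K) * \<rho> ^ (2 * K - 1) * e) \<le> e * cos_majorant (2 + 2 * \<rho>) K"
proof -
  have "e * (real (2 * K) * \<rho> ^ (2 * K - 1) / fact (2 * K)) \<le> e * ((2 + 2 * \<rho>) ^ (2 * K) / fact (2 * K))"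
    using of_nat_mult_power_diff_le[OF assms(1), of "2 * K"] assms(2)
    by (intro mult_left_mono divide_right_mono) auto
  then show ?thesis unfolding norm_cos_coeff cos_majorant_def by (simp add: field_simps)
qed

lemma mat_add_smult_minus:
  fixes A B P Q :: "complex mat"
  assumes "A \<in> carrier_mat n n" "B \<in> carrier_mat n n" "P \<in> carrier_mat n n" "Q \<in> carrier_mat n n"
  shows "(A + c \<cdot>\<^sub>m P) - (B + c \<cdot>\<^sub>m Q) = (A - B) + c \<cdot>\<^sub>m (P - Q)"
  using assms by (intro eq_matI) (auto simp: algebra_simps)

lemma cos_partial_diff_decomp:
  assumes X: "mat_bounded n X \<rho>" and Y: "mat_bounded n Y \<rho>" and rho: "\<rho> \<ge> 0"
    and D: "X - Y = R + E" and R: "rank_one_sum n r R" and E: "mat_bounded n E e" and e: "e \<ge> 0"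
  shows "\<exists>R' E'. cos_partial n X K - cos_partial n Y K = R' + E' \<and> rank_one_sum n (2 * K * K * r) R' \<and>
            mat_bounded n E' (e * (\<Sum>m<K. cos_majorant (2 + 2 * \<rho>) m))"
proof (induction K)
  case 0
  have "cos_partial n X 0 - cos_partial n Y 0 = 0\<^sub>m n n + 0\<^sub>m n n" by (intro eq_matI) auto
  then show ?case using rank_one_sum_zero mat_bounded_zero by fastforce
next
  case (Suc K)
  then obtain R' E' where H: "cos_partial n X K - cos_partial n Y K = R' + E'"
      "rank_one_sum n (2 * K * K * r) R'" "mat_bounded n E' (e * (\<Sum>m<K. cos_majorant (2 + 2 * \<rho>) m))"
    by auto
  obtain R2 E2 where P: "X ^\<^sub>m (2 * K) - Y ^\<^sub>m (2 * K) = R2 + E2" "rank_one_sum n (2 * K * r) R2"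
      "mat_bounded n E2 (real (2 * K) * \<rho> ^ (2 * K - 1) * e)"
    using mat_pow_diff_decomp[OF X Y rho D R E e] by blast
  have Xc: "X \<in> carrier_mat n n" and Yc: "Y \<in> carrier_mat n n"
    using mat_bounded_carrier X Y by auto
  have carriers: "R' \<in> carrier_mat n n" "E' \<in> carrier_mat n n" "R2 \<in> carrier_mat n n" "E2 \<in> carrier_mat n n"
    using rank_one_sum_carrier mat_bounded_carrier H P by auto
  have "cos_partial n X (Suc K) - cos_partial n Y (Suc K) =
      (cos_partial n X K - cos_partial n Y K) + cos_coeff K \<cdot>\<^sub>m (X ^\<^sub>m (2 * K) - Y ^\<^sub>m (2 * K))"
    using Xc Yc by (simp, intro mat_add_smult_minus) (auto intro: cos_partial_carrier)
  also have "\<dots> = (R' + cos_coeff K \<cdot>\<^sub>m R2) + (E' + cos_coeff K \<cdot>\<^sub>m E2)"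
    unfolding H(1) P(1) using carriers by (intro eq_matI) (auto simp: algebra_simps)
  finally have eq: "cos_partial n X (Suc K) - cos_partial n Y (Suc K) =
      (R' + cos_coeff K \<cdot>\<^sub>m R2) + (E' + cos_coeff K \<cdot>\<^sub>m E2)" .
  have "rank_one_sum n (2 * K * K * r + 2 * K * r) (R' + cos_coeff K \<cdot>\<^sub>m R2)"
    using rank_one_sum_add[OF H(2) rank_one_sum_smult[OF P(2)]] .
  then have low_rank: "rank_one_sum n (2 * Suc K * Suc K * r) (R' + cos_coeff K \<cdot>\<^sub>m R2)"
    by (rule rank_one_sum_mono) (simp add: algebra_simps)
  have "mat_bounded n (E' + cos_coeff K \<cdot>\<^sub>m E2)
      (e * (\<Sum>m<K. cos_majorant (2 + 2 * \<rho>) m) + e * cos_majorant (2 + 2 * \<rho>) K)"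
    using mat_bounded_add[OF H(3) mat_bounded_mono[OF mat_bounded_smult[OF P(3)]]]
      norm_cos_coeff_mult_le[OF rho e] by blast
  then have "mat_bounded n (E' + cos_coeff K \<cdot>\<^sub>m E2) (e * (\<Sum>m<Suc K. cos_majorant (2 + 2 * \<rho>) m))"
    by (simp add: algebra_simps)
  then show ?case using eq low_rank by blast
qed

lemma mat_cos_diff_decomp:
  assumes X: "mat_bounded n X \<rho>" and Y: "mat_bounded n Y \<rho>" and rho: "\<rho> \<ge> 0"
    and D: "X - Y = R + E" and R: "rank_one_sum n r R" and E: "mat_bounded n E e" and e: "e \<ge> 0"
  shows "\<exists>R' E'. mat_cos X - mat_cos Y = R' + E' \<and> rank_one_sum n (2 * K * K * r) R' \<and>
            mat_bounded n E' (2 * (\<Sum>i. cos_majorant \<rho> (i + K)) + e * (\<Sum>m. cos_majorant (2 + 2 * \<rho>) m))"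
proof -
  obtain R' E' where H: "cos_partial n X K - cos_partial n Y K = R' + E'" "rank_one_sum n (2 * K * K * r) R'"
      "mat_bounded n E' (e * (\<Sum>m<K. cos_majorant (2 + 2 * \<rho>) m))"
    using cos_partial_diff_decomp[OF X Y rho D R E e] by blast
  have Xc: "X \<in> carrier_mat n n" and Yc: "Y \<in> carrier_mat n n"
    using mat_bounded_carrier X Y by auto
  define TX where "TX = mat_cos X - cos_partial n X K"
  define TY where "TY = mat_cos Y - cos_partial n Y K"
  note carriers = mat_cos_carrier[OF Xc] mat_cos_carrier[OF Yc]
    cos_partial_carrier[OF Xc, of K] cos_partial_carrier[OF Yc, of K]
    rank_one_sum_carrier[OF H(2)] mat_bounded_carrier[OF H(3)]
  have "mat_cos X - mat_cos Y = (TX - TY) + (cos_partial n X K - cos_partial n Y K)"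
    unfolding TX_def TY_def using carriers by (intro eq_matI) auto
  also have "\<dots> = R' + ((TX - TY) + E')"
    unfolding H(1) TX_def TY_def using carriers by (intro eq_matI) auto
  finally have eq: "mat_cos X - mat_cos Y = R' + ((TX - TY) + E')" .
  have bound: "mat_bounded n ((TX - TY) + E')
      ((\<Sum>i. cos_majorant \<rho> (i + K)) + (\<Sum>i. cos_majorant \<rho> (i + K)) +
       e * (\<Sum>m<K. cos_majorant (2 + 2 * \<rho>) m))"
    unfolding TX_def TY_def
    by (intro mat_bounded_add mat_bounded_minus mat_bounded_mat_cos_tail X Y rho H(3))
  have "(\<Sum>m<K. cos_majorant (2 + 2 * \<rho>) m) \<le> (\<Sum>m. cos_majorant (2 + 2 * \<rho>) m)"
    using summable_cos_majorant[of "2 + 2 * \<rho>"] rho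
    by (intro sum_le_suminf) (auto intro: cos_majorant_nonneg)
  then have "mat_bounded n ((TX - TY) + E')
      (2 * (\<Sum>i. cos_majorant \<rho> (i + K)) + e * (\<Sum>m. cos_majorant (2 + 2 * \<rho>) m))"
    using e by (intro mat_bounded_mono[OF bound]) (simp add: mult_left_mono)
  then show ?thesis using eq H(2) by blast
qed

lemma mat_cos_perturb:
  assumes "\<epsilon> > 0" and rho: "\<rho> \<ge> 0"
  obtains \<delta> and K :: nat where "\<delta> > 0"
    and "\<And>n X Y R E r. mat_bounded n X \<rho> \<Longrightarrow> mat_bounded n Y \<rho> \<Longrightarrow> X - Y = R + E \<Longrightarrow>
           rank_one_sum n r R \<Longrightarrow> mat_bounded n E \<delta> \<Longrightarrow>
           \<exists>R' E'. mat_cos X - mat_cos Y = R' + E' \<and> rank_one_sum n (2 * K * K * r) R' \<and> mat_bounded n E' \<epsilon>"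
proof -
  obtain K where K: "norm (\<Sum>i. cos_majorant \<rho> (i + K)) < \<epsilon> / 4"
    using suminf_exist_split[OF _ summable_cos_majorant[OF rho], of "\<epsilon> / 4"] assms(1) by auto
  define B where "B = (\<Sum>m. cos_majorant (2 + 2 * \<rho>) m)"
  have "B \<ge> 0"
    unfolding B_def using summable_cos_majorant[of "2 + 2 * \<rho>"] rho
    by (intro suminf_nonneg) (auto intro: cos_majorant_nonneg)
  define \<delta> where "\<delta> = \<epsilon> / (2 * (B + 1))"
  have "\<delta> > 0" using assms(1) \<open>B \<ge> 0\<close> by (simp add: \<delta>_def)
  moreover have "2 * (\<Sum>i. cos_majorant \<rho> (i + K)) + \<delta> * B \<le> \<epsilon>"
  proof -
    have "\<delta> * B \<le> \<delta> * (B + 1)" using \<open>\<delta> > 0\<close> by simp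
    also have "\<dots> = \<epsilon> / 2" using \<open>B \<ge> 0\<close> by (simp add: \<delta>_def field_simps)
    finally show ?thesis using K by simp
  qed
  ultimately show ?thesis
    using that[of \<delta> K] mat_cos_diff_decomp[OF _ _ rho, where e=\<delta> and K=K] mat_bounded_mono
    unfolding B_def by (meson less_imp_le)
qed

subsection \<open>Toeplitz matrices and optimal circulants of a symbol sequence\<close>

definition toeplitz :: "nat \<Rightarrow> (int \<Rightarrow> complex) \<Rightarrow> complex mat" where
  "toeplitz n t = mat n n (\<lambda>(j, k). t (int j - int k))"

definition opt_circ_entry :: "nat \<Rightarrow> (int \<Rightarrow> complex) \<Rightarrow> int \<Rightarrow> complex" where
  "opt_circ_entry n t k = (of_int (int n - k) * t k + of_int k * t (k - int n)) / of_nat n"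

definition opt_circ :: "nat \<Rightarrow> (int \<Rightarrow> complex) \<Rightarrow> complex mat" where
  "opt_circ n t = mat n n (\<lambda>(j, k). opt_circ_entry n t ((int j - int k) mod int n))"

lemma toeplitz_mat_eq_toeplitz: "toeplitz_mat f n = toeplitz n (fourier_coeff f)"
  by (simp add: toeplitz_mat_def toeplitz_def)

lemma opt_circulant_eq_opt_circ: "opt_circulant f n = opt_circ n (fourier_coeff f)"
  by (simp add: opt_circulant_def opt_circ_def opt_circ_entry_def opt_circ_coeff_def)

lemma toeplitz_add: "toeplitz n (\<lambda>k. a k + b k) = toeplitz n a + toeplitz n b"
  by (intro eq_matI) (auto simp: toeplitz_def)

lemma opt_circ_entry_add: "opt_circ_entry n (\<lambda>k. a k + b k) x = opt_circ_entry n a x + opt_circ_entry n b x"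
  unfolding opt_circ_entry_def add_divide_distrib[symmetric]
  by (rule arg_cong[where f="\<lambda>z. z / of_nat n"]) (simp add: algebra_simps)

lemma opt_circ_add: "opt_circ n (\<lambda>k. a k + b k) = opt_circ n a + opt_circ n b"
  by (intro eq_matI) (auto simp: opt_circ_def opt_circ_entry_add)

lemma L2_set_norm_sum_le:
  "finite D \<Longrightarrow> L2_set (\<lambda>j. cmod (\<Sum>d\<in>D. h d j)) J \<le> (\<Sum>d\<in>D. L2_set (\<lambda>j. cmod (h d j)) J)"
proof (induction D rule: finite_induct)
  case (insert a D)
  have "L2_set (\<lambda>j. cmod (\<Sum>d\<in>insert a D. h d j)) J \<le> L2_set (\<lambda>j. cmod (h a j) + cmod (\<Sum>d\<in>D. h d j)) J"
    using insert by (intro L2_set_mono) (auto intro: norm_triangle_ineq)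
  also have "\<dots> \<le> L2_set (\<lambda>j. cmod (h a j)) J + L2_set (\<lambda>j. cmod (\<Sum>d\<in>D. h d j)) J"
    by (rule L2_set_triangle_ineq)
  finally show ?case using insert by simp
qed (simp add: L2_set_def)

lemma L2_set_norm_mult: "L2_set (\<lambda>j. cmod (c * f j)) J = cmod c * L2_set (\<lambda>j. cmod (f j)) J"
  by (simp add: norm_mult L2_set_right_distrib)

lemma int_mem_image_lessThan: "0 \<le> i \<Longrightarrow> i < int n \<Longrightarrow> i \<in> int ` {..<n}"
  by (rule image_eqI[of _ _ "nat i"]) auto

lemma sum_norm_shift_le:
  fixes U :: "int \<Rightarrow> complex"
  assumes U: "\<And>i. i < 0 \<or> i \<ge> int n \<Longrightarrow> U i = 0"
  shows "(\<Sum>j<n. (cmod (U (int j - d)))\<^sup>2) \<le> (\<Sum>k<n. (cmod (U (int k)))\<^sup>2)"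
proof -
  define \<phi> where "\<phi> i = (cmod (U i))\<^sup>2" for i
  define A where "A = (\<lambda>j. int j - d) ` {..<n}"
  define B where "B = int ` {..<n}"
  have "(\<Sum>j<n. \<phi> (int j - d)) = (\<Sum>i\<in>A. \<phi> i)"
    unfolding A_def by (subst sum.reindex) (auto simp: inj_on_def)
  also have "\<dots> \<le> (\<Sum>i\<in>A \<union> B. \<phi> i)"
    by (intro sum_mono2) (auto simp: A_def B_def \<phi>_def)
  also have "\<dots> = (\<Sum>i\<in>B. \<phi> i)"
  proof (rule sum.mono_neutral_right)
    show "\<forall>i\<in>A \<union> B - B. \<phi> i = 0"
    proof
      fix i assume "i \<in> A \<union> B - B"
      then have "i < 0 \<or> i \<ge> int n" unfolding B_def using int_mem_image_lessThan[of i n] by auto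
      then show "\<phi> i = 0" using U by (simp add: \<phi>_def)
    qed
  qed (auto simp: A_def B_def)
  also have "\<dots> = (\<Sum>k<n. \<phi> (int k))" unfolding B_def by (subst sum.reindex) auto
  finally show ?thesis by (simp add: \<phi>_def)
qed

lemma sum_banded_eq:
  fixes U :: "int \<Rightarrow> complex"
  assumes e: "\<And>d. \<bar>d\<bar> > int M \<Longrightarrow> e d = 0"
    and U: "\<And>i. i < 0 \<or> i \<ge> int n \<Longrightarrow> U i = 0"
  shows "(\<Sum>k<n. e (int j - int k) * U (int k)) = (\<Sum>d\<in>{-int M..int M}. e d * U (int j - d))"
proof -
  define g where "g i = e (int j - i) * U i" for i
  have "(\<Sum>k<n. e (int j - int k) * U (int k)) = (\<Sum>i\<in>int ` {..<n}. g i)"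
    by (subst sum.reindex) (auto simp: g_def)
  also have "\<dots> = (\<Sum>i\<in>int ` {..<n} \<union> {int j - int M..int j + int M}. g i)"
  proof (rule sum.mono_neutral_left)
    show "\<forall>i\<in>int ` {..<n} \<union> {int j - int M..int j + int M} - int ` {..<n}. g i = 0"
    proof
      fix i assume "i \<in> int ` {..<n} \<union> {int j - int M..int j + int M} - int ` {..<n}"
      then have "i < 0 \<or> i \<ge> int n" using int_mem_image_lessThan[of i n] by auto
      then show "g i = 0" using U by (simp add: g_def)
    qed
  qed auto
  also have "\<dots> = (\<Sum>i\<in>{int j - int M..int j + int M}. g i)"
  proof (rule sum.mono_neutral_right)
    show "\<forall>i\<in>int ` {..<n} \<union> {int j - int M..int j + int M} - {int j - int M..int j + int M}. g i = 0"
      using e by (auto simp: g_def)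
  qed auto
  also have "\<dots> = (\<Sum>d\<in>{-int M..int M}. e d * U (int j - d))"
    unfolding g_def by (rule sum.reindex_bij_witness[of _ "\<lambda>d. int j - d" "\<lambda>i. int j - i"]) auto
  finally show ?thesis .
qed

lemma mat_bounded_banded:
  assumes e: "\<And>d. \<bar>d\<bar> > int M \<Longrightarrow> e d = 0" and w: "\<And>k. cmod (w k) \<le> 1"
  shows "mat_bounded n (mat n n (\<lambda>(j, k). w k * e (int j - int k))) (\<Sum>d\<in>{-int M..int M}. cmod (e d))"
proof (rule mat_bounded_matI)
  fix v :: "complex vec" assume v: "v \<in> carrier_vec n"
  define U where "U i = (if 0 \<le> i \<and> i < int n then w (nat i) * v $ nat i else 0)" for i
  have U0: "U i = 0" if "i < 0 \<or> i \<ge> int n" for i using that by (auto simp: U_def)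
  have shift: "L2_set (\<lambda>j. cmod (U (int j - d))) {..<n} \<le> L2_set (\<lambda>k. cmod (v $ k)) {..<n}" for d
  proof -
    have "(\<Sum>j<n. (cmod (U (int j - d)))\<^sup>2) \<le> (\<Sum>k<n. (cmod (U (int k)))\<^sup>2)"
      by (rule sum_norm_shift_le[OF U0])
    also have "\<dots> \<le> (\<Sum>k<n. (cmod (v $ k))\<^sup>2)"
      using w by (intro sum_mono power_mono) (auto simp: U_def norm_mult intro: mult_left_le_one_le)
    finally show ?thesis unfolding L2_set_def by (rule real_sqrt_le_mono)
  qed
  have "L2_set (\<lambda>j. cmod (\<Sum>k<n. (case (j, k) of (j, k) \<Rightarrow> w k * e (int j - int k)) * v $ k)) {..<n}
      = L2_set (\<lambda>j. cmod (\<Sum>d\<in>{-int M..int M}. e d * U (int j - d))) {..<n}"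
  proof (rule L2_set_cong)
    fix j
    have "(\<Sum>k<n. (case (j, k) of (j, k) \<Rightarrow> w k * e (int j - int k)) * v $ k) =
        (\<Sum>k<n. e (int j - int k) * U (int k))"
      by (intro sum.cong) (auto simp: U_def)
    also have "\<dots> = (\<Sum>d\<in>{-int M..int M}. e d * U (int j - d))" by (rule sum_banded_eq[OF e U0])
    finally show "cmod (\<Sum>k<n. (case (j, k) of (j, k) \<Rightarrow> w k * e (int j - int k)) * v $ k) =
        cmod (\<Sum>d\<in>{-int M..int M}. e d * U (int j - d))" by simp
  qed simp
  also have "\<dots> \<le> (\<Sum>d\<in>{-int M..int M}. L2_set (\<lambda>j. cmod (e d * U (int j - d))) {..<n})"
    by (rule L2_set_norm_sum_le) simp
  also have "\<dots> \<le> (\<Sum>d\<in>{-int M..int M}. cmod (e d) * L2_set (\<lambda>k. cmod (v $ k)) {..<n})"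
    unfolding L2_set_norm_mult by (intro sum_mono mult_left_mono shift) auto
  finally show "L2_set (\<lambda>j. cmod (\<Sum>k<n. (case (j, k) of (j, k) \<Rightarrow> w k * e (int j - int k)) * v $ k)) {..<n}
       \<le> (\<Sum>d\<in>{-int M..int M}. cmod (e d)) * L2_set (\<lambda>k. cmod (v $ k)) {..<n}"
    by (simp add: sum_distrib_right)
qed

lemma opt_circ_entry_interior:
  assumes t: "\<And>d. \<bar>d\<bar> > int M \<Longrightarrow> t d = 0"
    and j: "j < n" and k: "M \<le> k" "k < n - M"
  shows "opt_circ_entry n t ((int j - int k) mod int n) - t (int j - int k) =
           - (of_int \<bar>int j - int k\<bar> * t (int j - int k) / of_nat n)"
proof -
  define d where "d = int j - int k"
  have n0: "(of_nat n :: complex) \<noteq> 0" using j by simp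
  show ?thesis unfolding d_def[symmetric]
  proof (cases "d \<ge> 0")
    case True
    have dm: "d mod int n = d" using True j unfolding d_def by (intro mod_pos_pos_trivial) auto
    have "t (d - int n) = 0" using t j k unfolding d_def by auto
    then have "opt_circ_entry n t (d mod int n) = of_int (int n - d) * t d / of_nat n"
      by (simp add: dm opt_circ_entry_def)
    then show "opt_circ_entry n t (d mod int n) - t d = - (of_int \<bar>d\<bar> * t d / of_nat n)"
      using True n0 by (simp add: field_simps)
  next
    case False
    have "(d + int n) mod int n = d + int n" using False j k unfolding d_def by (intro mod_pos_pos_trivial) auto
    then have dm: "d mod int n = d + int n" by simp
    have "t (d + int n) = 0" using t j k unfolding d_def by auto
    then have "opt_circ_entry n t (d mod int n) = of_int (d + int n) * t d / of_nat n"
      by (simp add: dm opt_circ_entry_def)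
    then show "opt_circ_entry n t (d mod int n) - t d = - (of_int \<bar>d\<bar> * t d / of_nat n)"
      using False n0 by (simp add: field_simps)
  qed
qed

lemma opt_circ_minus_toeplitz_banded:
  assumes t: "\<And>d. \<bar>d\<bar> > int M \<Longrightarrow> t d = 0" and n: "n > 2 * M"
  shows "\<exists>R E. opt_circ n t - toeplitz n t = R + E \<and> rank_one_sum n (2 * M) R \<and>
      mat_bounded n E (\<Sum>d\<in>{-int M..int M}. cmod (t d) * \<bar>d\<bar> / n)"
proof -
  define S where "S = {k. k < n \<and> (k < M \<or> n - M \<le> k)}"
  define e where "e d = - (of_int \<bar>d\<bar> * t d / of_nat n)" for d
  define D where "D j k = opt_circ_entry n t ((int j - int k) mod int n) - t (int j - int k)" for j k
  define R where "R = mat n n (\<lambda>(j, k). if k \<in> S then D j k else 0)"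
  define E where "E = mat n n (\<lambda>(j, k). (if k \<in> S then 0 else 1) * e (int j - int k))"
  have finite_S: "finite S" by (simp add: S_def)
  have "card S \<le> card ({..<M} \<union> {n - M..<n})" by (intro card_mono) (auto simp: S_def)
  also have "\<dots> \<le> 2 * M" using card_Un_le[of "{..<M}" "{n - M..<n}"] n by simp
  finally have "rank_one_sum n (2 * M) R"
    unfolding R_def by (rule rank_one_sum_mono[OF rank_one_sum_column_mask[OF finite_S]])
  moreover have "mat_bounded n E (\<Sum>d\<in>{-int M..int M}. cmod (e d))"
    unfolding E_def using t by (intro mat_bounded_banded) (auto simp: e_def)
  moreover have "(\<Sum>d\<in>{-int M..int M}. cmod (e d)) = (\<Sum>d\<in>{-int M..int M}. cmod (t d) * \<bar>d\<bar> / n)"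
    by (intro sum.cong) (auto simp: e_def norm_mult norm_divide)
  moreover have "opt_circ n t - toeplitz n t = R + E"
  proof (rule eq_matI)
    fix j k assume "j < dim_row (R + E)" "k < dim_col (R + E)"
    then have j: "j < n" and k: "k < n" by (auto simp: R_def E_def)
    show "(opt_circ n t - toeplitz n t) $$ (j, k) = (R + E) $$ (j, k)"
    proof (cases "k \<in> S")
      case False
      then have "M \<le> k" "k < n - M" using k by (auto simp: S_def)
      from opt_circ_entry_interior[OF t j this] show ?thesis
        using j k False by (simp add: R_def E_def D_def opt_circ_def toeplitz_def e_def)
    qed (use j k in \<open>simp add: R_def E_def D_def opt_circ_def toeplitz_def\<close>)
  qed (auto simp: R_def E_def opt_circ_def toeplitz_def)
  ultimately show ?thesis by auto
qed

lemma mod_add_diff_cancel_nat: "s \<le> n \<Longrightarrow> k < n \<Longrightarrow> ((k + s) mod n + (n - s)) mod n = (k :: nat)"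
proof -
  assume "s \<le> n" "k < n"
  have "((k + s) mod n + (n - s)) mod n = (k + s + (n - s)) mod n" by (simp add: mod_add_left_eq)
  also have "k + s + (n - s) = k + n" using \<open>s \<le> n\<close> by simp
  finally show ?thesis using \<open>k < n\<close> by simp
qed

lemma sum_rotate:
  fixes s n :: nat
  assumes "s \<le> n"
  shows "(\<Sum>j<n. \<phi> ((j + s) mod n)) = (\<Sum>i<n. \<phi> i)"
proof (rule sum.reindex_bij_witness[of _ "\<lambda>i. (i + (n - s)) mod n" "\<lambda>j. (j + s) mod n"])
  fix j assume "j \<in> {..<n}"
  then show "((j + s) mod n + (n - s)) mod n = j" using mod_add_diff_cancel_nat assms by simp
next
  fix i assume i: "i \<in> {..<n}"
  have "((i + (n - s)) mod n + s) mod n = (i + (n - s) + s) mod n" by (simp add: mod_add_left_eq)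
  also have "i + (n - s) + s = i + n" using assms by simp
  finally show "((i + (n - s)) mod n + s) mod n = i" using i by simp
qed (use assms in auto)

text \<open>Along a wrapped diagonal of offset \<open>k0\<close>, the index difference equals \<open>k0\<close> exactly \<open>n - k0\<close>
  times and \<open>k0 - n\<close> the remaining \<open>k0\<close> times.\<close>

lemma sum_wrapped_diagonal:
  assumes k0: "0 \<le> k0" "k0 < int n"
  shows "(\<Sum>u<n. t ((int u + k0) mod int n - int u)) = of_int (int n - k0) * t k0 + of_int k0 * t (k0 - int n)"
proof -
  define m where "m = nat k0"
  have m: "int m = k0" "m < n" using k0 by (auto simp: m_def)
  have lessThan_eq_Un: "{..<n} = {..<n - m} \<union> {n - m..<n}" by auto
  have "(\<Sum>u<n. t ((int u + k0) mod int n - int u)) =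
     (\<Sum>u\<in>{..<n - m}. t ((int u + k0) mod int n - int u)) + (\<Sum>u\<in>{n - m..<n}. t ((int u + k0) mod int n - int u))"
    by (subst lessThan_eq_Un, rule sum.union_disjoint) auto
  also have "(\<Sum>u\<in>{..<n - m}. t ((int u + k0) mod int n - int u)) = (\<Sum>u\<in>{..<n - m}. t k0)"
  proof (rule sum.cong)
    fix u assume "u \<in> {..<n - m}"
    then have "(int u + k0) mod int n = int u + k0" using m k0 by (intro mod_pos_pos_trivial) auto
    then show "t ((int u + k0) mod int n - int u) = t k0" by simp
  qed simp
  also have "(\<Sum>u\<in>{n - m..<n}. t ((int u + k0) mod int n - int u)) = (\<Sum>u\<in>{n - m..<n}. t (k0 - int n))"
  proof (rule sum.cong)
    fix u assume "u \<in> {n - m..<n}"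
    then have "(int u + k0 - int n) mod int n = int u + k0 - int n" using m k0 by (intro mod_pos_pos_trivial) auto
    then have "(int u + k0) mod int n = int u + k0 - int n"
      using mod_add_self2[of "int u + k0 - int n" "int n"] by simp
    then show "t ((int u + k0) mod int n - int u) = t (k0 - int n)" by simp
  qed simp
  also have "(\<Sum>u\<in>{..<n - m}. t k0) + (\<Sum>u\<in>{n - m..<n}. t (k0 - int n)) =
      of_int (int n - k0) * t k0 + of_int k0 * t (k0 - int n)"
    using m(2) by (simp add: of_nat_diff m(1)[symmetric])
  finally show ?thesis .
qed

text \<open>The optimal circulant is the average of the \<open>n\<close> cyclic conjugates of the Toeplitz matrix.\<close>

lemma opt_circ_entry_eq_average:
  assumes j: "j < n" and k: "k < n"
  shows "opt_circ_entry n t ((int j - int k) mod int n) =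
           (\<Sum>s<n. t (int ((j + s) mod n) - int ((k + s) mod n))) / of_nat n"
proof -
  define k0 where "k0 = (int j - int k) mod int n"
  have k0: "0 \<le> k0" "k0 < int n" using j by (auto simp: k0_def)
  have "(\<Sum>s<n. t (int ((j + s) mod n) - int ((k + s) mod n))) = (\<Sum>u<n. t ((int u + k0) mod int n - int u))"
  proof (rule sum.reindex_bij_witness[of _ "\<lambda>u. (u + (n - k)) mod n" "\<lambda>s. (k + s) mod n"])
    fix s assume s: "s \<in> {..<n}"
    show "((k + s) mod n + (n - k)) mod n = s"
      using mod_add_diff_cancel_nat[of k n s] k s by (simp add: add.commute)
    have "int ((j + s) mod n) = (int j + int s) mod int n" by (simp add: zmod_int)
    also have "\<dots> = (int k + int s + (int j - int k)) mod int n"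
      by (rule arg_cong[where f="\<lambda>x. x mod int n"]) simp
    also have "\<dots> = ((int k + int s) mod int n + k0) mod int n" unfolding k0_def by (simp add: mod_add_eq)
    also have "(int k + int s) mod int n = int ((k + s) mod n)" by (simp add: zmod_int)
    finally show "t ((int ((k + s) mod n) + k0) mod int n - int ((k + s) mod n)) =
        t (int ((j + s) mod n) - int ((k + s) mod n))" by simp
  next
    fix u assume u: "u \<in> {..<n}"
    have "(k + (u + (n - k)) mod n) mod n = (k + (u + (n - k))) mod n" by (simp add: mod_add_right_eq)
    also have "k + (u + (n - k)) = u + n" using k by simp
    finally show "(k + (u + (n - k)) mod n) mod n = u" using u by simp
  qed (use j in auto)
  then show ?thesis using j unfolding k0_def[symmetric] opt_circ_entry_def sum_wrapped_diagonal[OF k0] by simp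
qed

lemma L2_set_rotated_toeplitz_apply_le:
  assumes T: "mat_bounded n (toeplitz n t) \<delta>" and s: "s < n" and v: "v \<in> carrier_vec n"
  shows "L2_set (\<lambda>j. cmod (\<Sum>k<n. t (int ((j + s) mod n) - int ((k + s) mod n)) * v $ k)) {..<n}
           \<le> \<delta> * L2_set (\<lambda>k. cmod (v $ k)) {..<n}"
proof -
  define v' where "v' = vec n (\<lambda>k'. v $ ((k' + (n - s)) mod n))"
  have v': "v' \<in> carrier_vec n" by (simp add: v'_def)
  have rotated: "(\<Sum>k<n. t (int ((j + s) mod n) - int ((k + s) mod n)) * v $ k) =
      (toeplitz n t *\<^sub>v v') $ ((j + s) mod n)" for j
  proof -
    have "(\<Sum>k<n. t (int ((j + s) mod n) - int ((k + s) mod n)) * v $ k) =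
        (\<Sum>k<n. (\<lambda>k'. t (int ((j + s) mod n) - int k') * v $ ((k' + (n - s)) mod n)) ((k + s) mod n))"
      using mod_add_diff_cancel_nat[of s n] s by (intro sum.cong) auto
    also have "\<dots> = (\<Sum>k'<n. t (int ((j + s) mod n) - int k') * v $ ((k' + (n - s)) mod n))"
      using s by (intro sum_rotate) auto
    also have "\<dots> = (toeplitz n t *\<^sub>v v') $ ((j + s) mod n)"
      using s v' by (simp add: toeplitz_def v'_def scalar_prod_def atLeast0LessThan)
    finally show ?thesis .
  qed
  have "L2_set (\<lambda>j. cmod (\<Sum>k<n. t (int ((j + s) mod n) - int ((k + s) mod n)) * v $ k)) {..<n}
      = vec_norm2 (toeplitz n t *\<^sub>v v')"
    unfolding L2_set_def rotated vec_norm2_def using s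
    by (subst sum_rotate[where \<phi>="\<lambda>i. (cmod ((toeplitz n t *\<^sub>v v') $ i))\<^sup>2"]) (auto simp: toeplitz_def)
  also have "\<dots> \<le> \<delta> * vec_norm2 v'" by (rule mat_boundedD[OF T v'])
  also have "vec_norm2 v' = L2_set (\<lambda>k. cmod (v $ ((k + (n - s)) mod n))) {..<n}"
    unfolding vec_norm2_eq_L2_set by (intro L2_set_cong) (auto simp: v'_def)
  also have "\<dots> = L2_set (\<lambda>k. cmod (v $ k)) {..<n}"
    unfolding L2_set_def by (subst sum_rotate[where \<phi>="\<lambda>i. (cmod (v $ i))\<^sup>2"]) auto
  finally show ?thesis .
qed

lemma mat_bounded_opt_circ:
  assumes T: "mat_bounded n (toeplitz n t) \<delta>" and n: "n > 0"
  shows "mat_bounded n (opt_circ n t) \<delta>"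
  unfolding opt_circ_def
proof (rule mat_bounded_matI)
  fix v :: "complex vec" assume v: "v \<in> carrier_vec n"
  define w where "w s j = (\<Sum>k<n. t (int ((j + s) mod n) - int ((k + s) mod n)) * v $ k)" for s j
  have "(\<Sum>k<n. (case (j, k) of (j, k) \<Rightarrow> opt_circ_entry n t ((int j - int k) mod int n)) * v $ k) =
      inverse (of_nat n) * (\<Sum>s<n. w s j)" if j: "j < n" for j
  proof -
    have "(\<Sum>k<n. (case (j, k) of (j, k) \<Rightarrow> opt_circ_entry n t ((int j - int k) mod int n)) * v $ k)
        = (\<Sum>k<n. (\<Sum>s<n. t (int ((j + s) mod n) - int ((k + s) mod n))) / of_nat n * v $ k)"
      using j by (intro sum.cong) (auto simp: opt_circ_entry_eq_average)
    also have "\<dots> = (\<Sum>k<n. \<Sum>s<n. t (int ((j + s) mod n) - int ((k + s) mod n)) * v $ k) / of_nat n"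
      by (simp add: sum_divide_distrib sum_distrib_right)
    also have "\<dots> = inverse (of_nat n) * (\<Sum>s<n. w s j)"
      unfolding w_def by (subst sum.swap) (simp add: divide_inverse mult.commute)
    finally show ?thesis .
  qed
  then have "L2_set (\<lambda>j. cmod (\<Sum>k<n. (case (j, k) of (j, k) \<Rightarrow> opt_circ_entry n t ((int j - int k) mod int n)) * v $ k)) {..<n}
      = L2_set (\<lambda>j. cmod (inverse (of_nat n) * (\<Sum>s<n. w s j))) {..<n}"
    by (intro L2_set_cong) auto
  also have "\<dots> = inverse (real n) * L2_set (\<lambda>j. cmod (\<Sum>s<n. w s j)) {..<n}"
    unfolding L2_set_norm_mult by (simp add: norm_inverse)
  also have "\<dots> \<le> inverse (real n) * (\<Sum>s<n. L2_set (\<lambda>j. cmod (w s j)) {..<n})"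
    by (intro mult_left_mono L2_set_norm_sum_le) auto
  also have "\<dots> \<le> inverse (real n) * (\<Sum>s<n. \<delta> * L2_set (\<lambda>k. cmod (v $ k)) {..<n})"
    unfolding w_def by (intro mult_left_mono sum_mono L2_set_rotated_toeplitz_apply_le[OF T _ v]) auto
  also have "\<dots> = \<delta> * L2_set (\<lambda>k. cmod (v $ k)) {..<n}" using n by simp
  finally show "L2_set (\<lambda>j. cmod (\<Sum>k<n. (case (j, k) of (j, k) \<Rightarrow> opt_circ_entry n t ((int j - int k) mod int n)) * v $ k)) {..<n}
      \<le> \<delta> * L2_set (\<lambda>k. cmod (v $ k)) {..<n}" .
qed

subsection \<open>Toeplitz matrices are bounded by the symbol\<close>

definition fourier_mode :: "int \<Rightarrow> real \<Rightarrow> complex" where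
  "fourier_mode k \<theta> = exp (\<i> * of_int k * of_real \<theta>)"

lemma continuous_on_fourier_mode [continuous_intros]: "continuous_on S (fourier_mode k)"
  unfolding fourier_mode_def by (intro continuous_intros)

lemma fourier_mode_mult: "fourier_mode a \<theta> * fourier_mode b \<theta> = fourier_mode (a + b) \<theta>"
  by (simp add: fourier_mode_def exp_add[symmetric] algebra_simps)

lemma cnj_fourier_mode: "cnj (fourier_mode a \<theta>) = fourier_mode (- a) \<theta>"
  by (simp add: fourier_mode_def exp_cnj)

lemma fourier_coeff_eq_integral_fourier_mode:
  "fourier_coeff f m = integral {-pi..pi} (\<lambda>\<theta>. f \<theta> * fourier_mode (- m) \<theta>) / of_real (2 * pi)"
  unfolding fourier_coeff_def fourier_mode_def by simp

lemma integral_fourier_mode: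
  "integral {-pi..pi} (fourier_mode m) = (if m = 0 then of_real (2 * pi) else 0)"
proof (cases "m = 0")
  case True
  have "fourier_mode 0 = (\<lambda>_. 1)" by (auto simp: fourier_mode_def fun_eq_iff)
  then show ?thesis using True by (simp add: scaleR_conv_of_real)
next
  case False
  define a where "a = \<i> * of_int m"
  have a: "a \<noteq> 0" using False by (simp add: a_def)
  have "((\<lambda>x. exp (a * x) / a) has_vector_derivative exp (a * t)) (at t within {-pi..pi})" for t
    using a by (intro derivative_eq_intros has_complex_derivative_imp_has_vector_derivative[unfolded o_def] | simp)+
  then have "((\<lambda>t. exp (a * of_real t)) has_integral exp (a * of_real pi) / a - exp (a * of_real (-pi)) / a) {-pi..pi}"
    by (intro fundamental_theorem_of_calculus) auto
  moreover have "exp (a * of_real pi) = exp (a * of_real (-pi))"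
  proof -
    have "exp (a * of_real pi) = cis (real_of_int m * pi)" by (simp add: a_def cis_conv_exp mult_ac)
    also have "\<dots> = cis (- (real_of_int m * pi))" by (simp add: complex_eq_iff sin_times_pi_eq_0)
    also have "\<dots> = exp (a * of_real (-pi))" by (simp add: a_def cis_conv_exp mult_ac)
    finally show ?thesis .
  qed
  ultimately have "(fourier_mode m has_integral 0) {-pi..pi}" by (simp add: fourier_mode_def[abs_def] a_def)
  then show ?thesis using False by (simp add: integral_unique)
qed

lemma integral_complex_of_real:
  "f integrable_on S \<Longrightarrow> integral S (\<lambda>x. complex_of_real (f x)) = of_real (integral S f)"
  using has_integral_of_real[OF integrable_integral] by (rule integral_unique)

lemma parseval_trig_sum:
  "integral {-pi..pi} (\<lambda>\<theta>. (cmod (\<Sum>k<n. c k * fourier_mode (int k) \<theta>))\<^sup>2) = 2 * pi * (\<Sum>k<n. (cmod (c k))\<^sup>2)"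
proof -
  define W where "W \<theta> = (\<Sum>k<n. c k * fourier_mode (int k) \<theta>)" for \<theta>
  have pointwise: "of_real ((cmod (W \<theta>))\<^sup>2) =
      (\<Sum>k<n. \<Sum>l<n. (c k * cnj (c l)) * fourier_mode (int k - int l) \<theta>)" for \<theta>
  proof -
    have "of_real ((cmod (W \<theta>))\<^sup>2) = W \<theta> * cnj (W \<theta>)" by (rule complex_norm_square)
    also have "\<dots> = (\<Sum>k<n. \<Sum>l<n. (c k * fourier_mode (int k) \<theta>) * (cnj (c l) * fourier_mode (- int l) \<theta>))"
      by (simp add: W_def cnj_fourier_mode sum_product)
    also have "\<dots> = (\<Sum>k<n. \<Sum>l<n. (c k * cnj (c l)) * fourier_mode (int k - int l) \<theta>)"
      using fourier_mode_mult[of "int k" \<theta> "- int l" for k l] by (simp add: mult_ac)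
    finally show ?thesis .
  qed
  have "continuous_on {-pi..pi} W" unfolding W_def by (intro continuous_intros)
  then have "of_real (integral {-pi..pi} (\<lambda>\<theta>. (cmod (W \<theta>))\<^sup>2)) =
      integral {-pi..pi} (\<lambda>\<theta>. of_real ((cmod (W \<theta>))\<^sup>2) :: complex)"
    by (intro integral_complex_of_real[symmetric] integrable_continuous_interval continuous_intros)
  also have "\<dots> = (\<Sum>k<n. \<Sum>l<n. (c k * cnj (c l)) * integral {-pi..pi} (fourier_mode (int k - int l)))"
    unfolding pointwise
    by (simp add: integral_sum integrable_on_mult_right integrable_sum integrable_continuous_interval
        continuous_on_fourier_mode)
  also have "\<dots> = (\<Sum>k<n. of_real ((cmod (c k))\<^sup>2) * of_real (2 * pi))"
    by (simp add: integral_fourier_mode complex_norm_square[symmetric] if_distrib cong: if_cong)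
  also have "\<dots> = of_real (2 * pi * (\<Sum>k<n. (cmod (c k))\<^sup>2))"
    by (simp add: sum_distrib_left mult_ac)
  finally show ?thesis unfolding W_def of_real_eq_iff .
qed

lemma toeplitz_row_eq_integral:
  assumes g: "continuous_on {-pi..pi} g"
  shows "(\<Sum>k<n. fourier_coeff g (int j - int k) * c k) =
    integral {-pi..pi} (\<lambda>\<theta>. g \<theta> * (\<Sum>k<n. c k * fourier_mode (int k) \<theta>) * fourier_mode (- int j) \<theta>)
      / of_real (2 * pi)"
proof -
  have coeff: "fourier_coeff g (int j - int k) =
      integral {-pi..pi} (\<lambda>\<theta>. g \<theta> * fourier_mode (- int j) \<theta> * fourier_mode (int k) \<theta>) / of_real (2 * pi)"
    for k
  proof -
    have "fourier_mode (- (int j - int k)) \<theta> = fourier_mode (- int j) \<theta> * fourier_mode (int k) \<theta>" for \<theta>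
      by (simp add: fourier_mode_mult)
    then show ?thesis unfolding fourier_coeff_eq_integral_fourier_mode by (simp add: mult.assoc)
  qed
  have "(\<Sum>k<n. fourier_coeff g (int j - int k) * c k) =
      (\<Sum>k<n. integral {-pi..pi} (\<lambda>\<theta>. g \<theta> * fourier_mode (- int j) \<theta> * fourier_mode (int k) \<theta> * c k))
        / of_real (2 * pi)"
    unfolding coeff by (simp add: sum_divide_distrib)
  also have "(\<Sum>k<n. integral {-pi..pi} (\<lambda>\<theta>. g \<theta> * fourier_mode (- int j) \<theta> * fourier_mode (int k) \<theta> * c k)) =
      integral {-pi..pi} (\<lambda>\<theta>. \<Sum>k<n. g \<theta> * fourier_mode (- int j) \<theta> * fourier_mode (int k) \<theta> * c k)"
    by (rule integral_sum[symmetric]) (auto intro!: integrable_continuous_interval continuous_intros g)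
  also have "(\<lambda>\<theta>. \<Sum>k<n. g \<theta> * fourier_mode (- int j) \<theta> * fourier_mode (int k) \<theta> * c k) =
      (\<lambda>\<theta>. g \<theta> * (\<Sum>k<n. c k * fourier_mode (int k) \<theta>) * fourier_mode (- int j) \<theta>)"
    by (auto simp: fun_eq_iff sum_distrib_left sum_distrib_right mult_ac)
  finally show ?thesis .
qed

lemma sum_norm_sq_eq_integral:
  assumes h: "continuous_on {-pi..pi} h"
    and u: "\<And>j. u j = integral {-pi..pi} (\<lambda>\<theta>. h \<theta> * fourier_mode (- int j) \<theta>) / of_real (2 * pi)"
  shows "of_real (\<Sum>j<n. (cmod (u j))\<^sup>2) =
    integral {-pi..pi} (\<lambda>\<theta>. h \<theta> * cnj (\<Sum>j<n. u j * fourier_mode (int j) \<theta>)) / of_real (2 * pi)"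
proof -
  have "of_real (\<Sum>j<n. (cmod (u j))\<^sup>2) = (\<Sum>j<n. u j * cnj (u j))"
    unfolding of_real_sum by (simp only: complex_norm_square)
  also have "\<dots> = (\<Sum>j<n. integral {-pi..pi} (\<lambda>\<theta>. h \<theta> * fourier_mode (- int j) \<theta> * cnj (u j))) / of_real (2 * pi)"
    by (simp add: u sum_divide_distrib)
  also have "(\<Sum>j<n. integral {-pi..pi} (\<lambda>\<theta>. h \<theta> * fourier_mode (- int j) \<theta> * cnj (u j))) =
      integral {-pi..pi} (\<lambda>\<theta>. \<Sum>j<n. h \<theta> * fourier_mode (- int j) \<theta> * cnj (u j))"
    by (rule integral_sum[symmetric]) (auto intro!: integrable_continuous_interval continuous_intros h)
  also have "(\<lambda>\<theta>. \<Sum>j<n. h \<theta> * fourier_mode (- int j) \<theta> * cnj (u j)) =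
      (\<lambda>\<theta>. h \<theta> * cnj (\<Sum>j<n. u j * fourier_mode (int j) \<theta>))"
    by (auto simp: fun_eq_iff cnj_fourier_mode sum_distrib_left mult_ac)
  finally show ?thesis .
qed

lemma mult_le_mean_scaled_squares:
  fixes a b t :: real
  assumes "t > 0"
  shows "a * b \<le> (t * a\<^sup>2 + b\<^sup>2 / t) / 2"
proof -
  have "0 \<le> (t * a - b)\<^sup>2" by simp
  then have "2 * t * (a * b) \<le> t\<^sup>2 * a\<^sup>2 + b\<^sup>2" by (simp add: power2_eq_square algebra_simps)
  then show ?thesis using assms by (simp add: field_simps power2_eq_square)
qed

lemma le_if_le_mean_scaled:
  fixes S A :: real
  assumes "S \<ge> 0" "A \<ge> 0" and H: "\<And>t. t > 0 \<Longrightarrow> S \<le> (t * A + S / t) / 2"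
  shows "S \<le> A"
proof (cases "S = 0 \<or> A = 0")
  case True
  then show ?thesis using H[of 1] assms(1,2) by auto
next
  case False
  then have "S \<le> (S / A * A + S / (S / A)) / 2" using H[of "S / A"] assms(1,2) by simp
  also have "\<dots> = (S + A) / 2" using False by (simp add: field_simps)
  finally show ?thesis by simp
qed

lemma norm_integral_mult_cnj_le:
  fixes h U :: "real \<Rightarrow> complex"
  assumes h: "continuous_on {a..b} h" and U: "continuous_on {a..b} U" and t: "t > 0"
  shows "cmod (integral {a..b} (\<lambda>\<theta>. h \<theta> * cnj (U \<theta>))) \<le>
    (t * integral {a..b} (\<lambda>\<theta>. (cmod (h \<theta>))\<^sup>2) + integral {a..b} (\<lambda>\<theta>. (cmod (U \<theta>))\<^sup>2) / t) / 2"
proof -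
  have int_h: "(\<lambda>\<theta>. (cmod (h \<theta>))\<^sup>2) integrable_on {a..b}"
    by (intro integrable_continuous_interval continuous_intros h)
  have int_U: "(\<lambda>\<theta>. (cmod (U \<theta>))\<^sup>2) integrable_on {a..b}"
    by (intro integrable_continuous_interval continuous_intros U)
  have "cmod (integral {a..b} (\<lambda>\<theta>. h \<theta> * cnj (U \<theta>))) \<le>
      integral {a..b} (\<lambda>\<theta>. (t * (cmod (h \<theta>))\<^sup>2 + (cmod (U \<theta>))\<^sup>2 / t) / 2)"
  proof (rule integral_norm_bound_integral)
    show "(\<lambda>\<theta>. h \<theta> * cnj (U \<theta>)) integrable_on {a..b}"
      by (intro integrable_continuous_interval continuous_intros h U)
    show "(\<lambda>\<theta>. (t * (cmod (h \<theta>))\<^sup>2 + (cmod (U \<theta>))\<^sup>2 / t) / 2) integrable_on {a..b}"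
      using int_h int_U by (intro integrable_on_divide integrable_add integrable_on_mult_right) auto
    show "cmod (h \<theta> * cnj (U \<theta>)) \<le> (t * (cmod (h \<theta>))\<^sup>2 + (cmod (U \<theta>))\<^sup>2 / t) / 2" for \<theta>
      unfolding norm_mult complex_mod_cnj by (rule mult_le_mean_scaled_squares[OF t])
  qed
  also have "\<dots> = (t * integral {a..b} (\<lambda>\<theta>. (cmod (h \<theta>))\<^sup>2) + integral {a..b} (\<lambda>\<theta>. (cmod (U \<theta>))\<^sup>2) / t) / 2"
    using int_h int_U by (simp add: integral_add integrable_on_mult_right integrable_on_divide)
  finally show ?thesis .
qed

lemma integral_norm_mult_square_le:
  fixes g V :: "real \<Rightarrow> complex"
  assumes g: "continuous_on {a..b} g" and V: "continuous_on {a..b} V"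
    and g_le: "\<And>\<theta>. \<theta> \<in> {a..b} \<Longrightarrow> cmod (g \<theta>) \<le> \<delta>"
  shows "integral {a..b} (\<lambda>\<theta>. (cmod (g \<theta> * V \<theta>))\<^sup>2) \<le> \<delta>\<^sup>2 * integral {a..b} (\<lambda>\<theta>. (cmod (V \<theta>))\<^sup>2)"
proof -
  have "integral {a..b} (\<lambda>\<theta>. (cmod (g \<theta> * V \<theta>))\<^sup>2) \<le> integral {a..b} (\<lambda>\<theta>. \<delta>\<^sup>2 * (cmod (V \<theta>))\<^sup>2)"
  proof (rule integral_le)
    fix \<theta> assume "\<theta> \<in> {a..b}"
    then have "cmod (g \<theta> * V \<theta>) \<le> \<delta> * cmod (V \<theta>)"
      unfolding norm_mult using g_le by (intro mult_right_mono) auto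
    then have "(cmod (g \<theta> * V \<theta>))\<^sup>2 \<le> (\<delta> * cmod (V \<theta>))\<^sup>2" by (intro power_mono) auto
    then show "(cmod (g \<theta> * V \<theta>))\<^sup>2 \<le> \<delta>\<^sup>2 * (cmod (V \<theta>))\<^sup>2" by (simp add: power_mult_distrib)
  qed (intro integrable_continuous_interval continuous_intros g V)+
  then show ?thesis by simp
qed

text \<open>Writing \<open>A\<^sub>n[g] v\<close> as the first Fourier coefficients of \<open>g V\<close>, with \<open>V\<close> the trigonometric
  polynomial with coefficients \<open>v\<close>, Parseval's identity gives \<open>\<parallel>A\<^sub>n[g] v\<parallel>\<^sup>2 \<le> \<parallel>g V\<parallel>\<^sub>2\<^sup>2 / 2\<pi> \<le> \<delta>\<^sup>2 \<parallel>v\<parallel>\<^sup>2\<close>.\<close>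

lemma mat_bounded_toeplitz:
  assumes g: "continuous_on {-pi..pi} g" and g_le: "\<And>\<theta>. \<theta> \<in> {-pi..pi} \<Longrightarrow> cmod (g \<theta>) \<le> \<delta>"
  shows "mat_bounded n (toeplitz n (fourier_coeff g)) \<delta>"
  unfolding toeplitz_def
proof (rule mat_bounded_matI)
  fix v :: "complex vec" assume v: "v \<in> carrier_vec n"
  have "cmod (g 0) \<le> \<delta>" using pi_gt_zero by (intro g_le) simp
  then have "\<delta> \<ge> 0" using norm_ge_zero order.trans by blast
  define I where "I = {-pi..pi}"
  define V where "V \<theta> = (\<Sum>k<n. v $ k * fourier_mode (int k) \<theta>)" for \<theta>
  define h where "h \<theta> = g \<theta> * V \<theta>" for \<theta>
  define u where "u j = (\<Sum>k<n. fourier_coeff g (int j - int k) * v $ k)" for j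
  define U where "U \<theta> = (\<Sum>j<n. u j * fourier_mode (int j) \<theta>)" for \<theta>
  define S where "S = (\<Sum>j<n. (cmod (u j))\<^sup>2)"
  define P where "P = (\<Sum>k<n. (cmod (v $ k))\<^sup>2)"
  have "S \<ge> 0" "P \<ge> 0" by (simp_all add: S_def P_def sum_nonneg)
  have cont: "continuous_on I h" "continuous_on I U"
    unfolding h_def V_def U_def I_def by (intro continuous_intros g)+
  have "u j = integral I (\<lambda>\<theta>. h \<theta> * fourier_mode (- int j) \<theta>) / of_real (2 * pi)" for j
    unfolding u_def h_def V_def I_def by (rule toeplitz_row_eq_integral[OF g])
  then have "of_real S = integral I (\<lambda>\<theta>. h \<theta> * cnj (U \<theta>)) / of_real (2 * pi)"
    unfolding S_def U_def I_def by (intro sum_norm_sq_eq_integral cont(1)[unfolded I_def])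
  then have "integral I (\<lambda>\<theta>. h \<theta> * cnj (U \<theta>)) = of_real (2 * pi * S)"
    using pi_gt_zero by (simp add: field_simps)
  then have S_eq: "2 * pi * S = cmod (integral I (\<lambda>\<theta>. h \<theta> * cnj (U \<theta>)))"
    using \<open>S \<ge> 0\<close> pi_gt_zero by (simp add: norm_mult)
  have int_U: "integral I (\<lambda>\<theta>. (cmod (U \<theta>))\<^sup>2) = 2 * pi * S"
    unfolding U_def S_def I_def by (rule parseval_trig_sum)
  have "integral I (\<lambda>\<theta>. (cmod (h \<theta>))\<^sup>2) \<le> \<delta>\<^sup>2 * integral I (\<lambda>\<theta>. (cmod (V \<theta>))\<^sup>2)"
    unfolding h_def V_def I_def by (intro integral_norm_mult_square_le g g_le continuous_intros)
  also have "\<dots> = \<delta>\<^sup>2 * (2 * pi * P)"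
    unfolding V_def P_def I_def by (simp add: parseval_trig_sum)
  finally have int_h: "integral I (\<lambda>\<theta>. (cmod (h \<theta>))\<^sup>2) \<le> \<delta>\<^sup>2 * (2 * pi * P)" .
  have mean: "S \<le> (t * (\<delta>\<^sup>2 * P) + S / t) / 2" if t: "t > 0" for t
  proof -
    have "2 * pi * S \<le> (t * integral I (\<lambda>\<theta>. (cmod (h \<theta>))\<^sup>2) + integral I (\<lambda>\<theta>. (cmod (U \<theta>))\<^sup>2) / t) / 2"
      unfolding S_eq I_def by (rule norm_integral_mult_cnj_le[OF cont[unfolded I_def] t])
    also have "\<dots> = (t * integral I (\<lambda>\<theta>. (cmod (h \<theta>))\<^sup>2) + 2 * pi * S / t) / 2"
      by (simp only: int_U)
    also have "\<dots> \<le> (t * (\<delta>\<^sup>2 * (2 * pi * P)) + 2 * pi * S / t) / 2"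
      using int_h t by (intro divide_right_mono add_right_mono mult_left_mono) auto
    also have "\<dots> = 2 * pi * ((t * (\<delta>\<^sup>2 * P) + S / t) / 2)" by (simp add: field_simps)
    finally show ?thesis using pi_gt_zero by simp
  qed
  have "0 \<le> \<delta>\<^sup>2 * P" using \<open>P \<ge> 0\<close> by simp
  then have "sqrt S \<le> sqrt (\<delta>\<^sup>2 * P)"
    by (intro real_sqrt_le_mono le_if_le_mean_scaled[OF \<open>S \<ge> 0\<close> _ mean])
  also have "\<dots> = \<delta> * sqrt P" using \<open>\<delta> \<ge> 0\<close> by (simp add: real_sqrt_mult)
  finally have "sqrt S \<le> \<delta> * sqrt P" .
  then show "L2_set (\<lambda>j. cmod (\<Sum>k<n. (case (j, k) of (j, k) \<Rightarrow> fourier_coeff g (int j - int k)) * v $ k)) {..<n}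
       \<le> \<delta> * L2_set (\<lambda>k. cmod (v $ k)) {..<n}"
    by (simp add: L2_set_def S_def P_def u_def)
qed

subsection \<open>Approximation by trigonometric polynomials\<close>

definition trig_sum :: "(complex \<times> int) list \<Rightarrow> real \<Rightarrow> complex" where
  "trig_sum F \<theta> = (\<Sum>(b, k)\<leftarrow>F. b * fourier_mode k \<theta>)"

definition is_trig_poly :: "(real \<Rightarrow> complex) \<Rightarrow> bool" where
  "is_trig_poly q \<longleftrightarrow> (\<exists>F. q = trig_sum F)"

lemma trig_sum_Cons: "trig_sum ((b, k) # F) \<theta> = b * fourier_mode k \<theta> + trig_sum F \<theta>"
  by (simp add: trig_sum_def)

lemma is_trig_poly_const: "is_trig_poly (\<lambda>\<theta>. c)"
  unfolding is_trig_poly_def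
  by (rule exI[of _ "[(c, 0)]"]) (simp add: trig_sum_def fourier_mode_def fun_eq_iff)

lemma is_trig_poly_fourier_mode: "is_trig_poly (fourier_mode k)"
  unfolding is_trig_poly_def by (rule exI[of _ "[(1, k)]"]) (simp add: trig_sum_def fun_eq_iff)

lemma is_trig_poly_add: "is_trig_poly p \<Longrightarrow> is_trig_poly q \<Longrightarrow> is_trig_poly (\<lambda>\<theta>. p \<theta> + q \<theta>)"
proof -
  assume "is_trig_poly p" "is_trig_poly q"
  then obtain F G where "p = trig_sum F" and "q = trig_sum G" by (auto simp: is_trig_poly_def)
  then have "(\<lambda>\<theta>. p \<theta> + q \<theta>) = trig_sum (F @ G)" by (simp add: trig_sum_def fun_eq_iff)
  then show ?thesis unfolding is_trig_poly_def by blast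
qed

lemma sum_list_mult_sum_list:
  fixes f g :: "'a \<Rightarrow> 'b::comm_ring"
  shows "sum_list (map f xs) * sum_list (map g ys) = sum_list [f x * g y. x \<leftarrow> xs, y \<leftarrow> ys]"
  by (induction xs) (simp_all add: algebra_simps sum_list_const_mult)

lemma is_trig_poly_mult: "is_trig_poly p \<Longrightarrow> is_trig_poly q \<Longrightarrow> is_trig_poly (\<lambda>\<theta>. p \<theta> * q \<theta>)"
proof -
  assume "is_trig_poly p" "is_trig_poly q"
  then obtain F G where F: "p = trig_sum F" and G: "q = trig_sum G" by (auto simp: is_trig_poly_def)
  define H where "H = [(fst x * fst y, snd x + snd y). x \<leftarrow> F, y \<leftarrow> G]"
  have term_mult: "(case x of (b, k) \<Rightarrow> b * fourier_mode k \<theta>) * (case y of (b, k) \<Rightarrow> b * fourier_mode k \<theta>) =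
      (case (fst x * fst y, snd x + snd y) of (b, k) \<Rightarrow> b * fourier_mode k \<theta>)" for x y :: "complex \<times> int" and \<theta>
    by (cases x, cases y) (simp add: fourier_mode_mult[symmetric] mult_ac)
  have "p \<theta> * q \<theta> = trig_sum H \<theta>" for \<theta>
    unfolding F G trig_sum_def sum_list_mult_sum_list H_def by (simp only: map_concat map_map o_def term_mult)
  then show ?thesis unfolding is_trig_poly_def by blast
qed

lemma is_trig_poly_cos: "is_trig_poly (\<lambda>\<theta>. complex_of_real (cos \<theta>))"
proof -
  have "(\<lambda>\<theta>. complex_of_real (cos \<theta>)) = (\<lambda>\<theta>. (1/2) * fourier_mode 1 \<theta> + (1/2) * fourier_mode (-1) \<theta>)"
    unfolding cos_of_real[symmetric] cos_exp_eq by (simp add: fourier_mode_def field_simps)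
  then show ?thesis by (simp only:) (intro is_trig_poly_add is_trig_poly_mult is_trig_poly_const is_trig_poly_fourier_mode)
qed

lemma is_trig_poly_sin: "is_trig_poly (\<lambda>\<theta>. complex_of_real (sin \<theta>))"
proof -
  have "(\<lambda>\<theta>. complex_of_real (sin \<theta>)) =
      (\<lambda>\<theta>. (1 / (2 * \<i>)) * fourier_mode 1 \<theta> + (- 1 / (2 * \<i>)) * fourier_mode (-1) \<theta>)"
    unfolding sin_of_real[symmetric] sin_exp_eq by (simp add: fourier_mode_def field_simps)
  then show ?thesis by (simp only:) (intro is_trig_poly_add is_trig_poly_mult is_trig_poly_const is_trig_poly_fourier_mode)
qed

lemma is_trig_poly_real_polynomial_function_cis:
  "real_polynomial_function r \<Longrightarrow> is_trig_poly (\<lambda>\<theta>. complex_of_real (r (cis \<theta>)))"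
proof (induction rule: real_polynomial_function.induct)
  case (linear r)
  then interpret bounded_linear r .
  have r_eq: "r z = Re z * r 1 + Im z * r \<i>" for z
  proof -
    have "z = Re z *\<^sub>R 1 + Im z *\<^sub>R \<i>" by (simp add: complex_eq_iff)
    then have "r z = r (Re z *\<^sub>R 1 + Im z *\<^sub>R \<i>)" by (rule arg_cong)
    also have "\<dots> = Re z * r 1 + Im z * r \<i>" by (simp add: add scaleR)
    finally show ?thesis .
  qed
  have "complex_of_real (r (cis \<theta>)) =
      complex_of_real (cos \<theta>) * of_real (r 1) + complex_of_real (sin \<theta>) * of_real (r \<i>)" for \<theta>
    using r_eq[of "cis \<theta>"] by simp
  then show ?case
    by (simp only:) (intro is_trig_poly_add is_trig_poly_mult is_trig_poly_cos is_trig_poly_sin is_trig_poly_const)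
qed (simp_all add: is_trig_poly_const is_trig_poly_add is_trig_poly_mult)

lemma is_trig_poly_polynomial_function_cis:
  assumes "polynomial_function p"
  shows "is_trig_poly (\<lambda>\<theta>. p (cis \<theta>))"
proof -
  have "real_polynomial_function (Re \<circ> p)" "real_polynomial_function (Im \<circ> p)"
    using assms bounded_linear_Re bounded_linear_Im unfolding polynomial_function_def by blast+
  moreover have "(\<lambda>\<theta>. p (cis \<theta>)) =
      (\<lambda>\<theta>. complex_of_real ((Re \<circ> p) (cis \<theta>)) + \<i> * complex_of_real ((Im \<circ> p) (cis \<theta>)))"
    by (simp add: complex_eq_iff fun_eq_iff)
  ultimately show ?thesis
    by (simp only:) (intro is_trig_poly_add is_trig_poly_mult is_trig_poly_const
        is_trig_poly_real_polynomial_function_cis)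
qed

lemma continuous_on_trig_sum [continuous_intros]: "continuous_on S (trig_sum F)"
proof (induction F)
  case Nil
  then show ?case by (simp add: trig_sum_def continuous_on_const)
next
  case (Cons x F)
  then show ?case by (cases x) (simp add: trig_sum_Cons[abs_def] continuous_intros)
qed

lemma fourier_coeff_trig_sum_eq_0:
  assumes "\<forall>x\<in>set F. snd x \<noteq> m"
  shows "fourier_coeff (trig_sum F) m = 0"
proof -
  have "integral {-pi..pi} (\<lambda>\<theta>. trig_sum F \<theta> * fourier_mode (- m) \<theta>) = 0"
    using assms
  proof (induction F)
    case (Cons x F)
    obtain b k where x: "x = (b, k)" by (cases x)
    have "integral {-pi..pi} (\<lambda>\<theta>. trig_sum (x # F) \<theta> * fourier_mode (- m) \<theta>) =
        integral {-pi..pi} (\<lambda>\<theta>. b * fourier_mode (k - m) \<theta> + trig_sum F \<theta> * fourier_mode (- m) \<theta>)"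
      by (simp add: x trig_sum_Cons algebra_simps fourier_mode_mult)
    also have "\<dots> = b * integral {-pi..pi} (fourier_mode (k - m)) +
        integral {-pi..pi} (\<lambda>\<theta>. trig_sum F \<theta> * fourier_mode (- m) \<theta>)"
      by (simp add: integral_add integrable_continuous_interval continuous_intros)
    finally show ?case using Cons x by (simp add: integral_fourier_mode)
  qed (simp add: trig_sum_def)
  then show ?thesis by (simp add: fourier_coeff_eq_integral_fourier_mode)
qed

text \<open>Near the cut of \<open>Arg\<close>, periodicity lets one replace \<open>Arg z\<close> by \<open>Arg (- z) + \<pi>\<close>.\<close>

lemma continuous_on_sphere_comp_Arg:
  assumes cont: "continuous_on UNIV f" and per: "\<And>x. f (x + 2 * pi) = f x"
  shows "continuous_on (sphere 0 1) (\<lambda>z. f (Arg z))"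
proof -
  have cf: "continuous (at x within S) f" for x S
    using cont by (simp add: continuous_on_eq_continuous_at continuous_at_imp_continuous_within)
  have "continuous (at z within sphere 0 1) (\<lambda>z. f (Arg z))" if z: "z \<in> sphere 0 1" for z
  proof (cases "z \<in> \<real>\<^sub>\<le>\<^sub>0")
    case False
    then show ?thesis by (intro continuous_within_compose2[OF continuous_within_Arg[OF False] cf])
  next
    case True
    have "z \<noteq> 0" using z by auto
    then have "- z \<notin> \<real>\<^sub>\<le>\<^sub>0" using True by (auto simp: complex_nonpos_Reals_iff complex_eq_iff)
    then have "continuous (at z within sphere 0 1) (\<lambda>w. Arg (- w))"
      by (intro continuous_within_compose2[where f="\<lambda>w. - w" and g=Arg] continuous_intros continuous_within_Arg)
    then have c: "continuous (at z within sphere 0 1) (\<lambda>w. f (Arg (- w) + pi))"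
      by (intro continuous_within_compose2[OF _ cf] continuous_intros)
    show ?thesis
    proof (rule continuous_transform_within[OF c, of 1])
      fix w :: complex assume "w \<in> sphere 0 1"
      then have "w \<noteq> 0" by auto
      then show "f (Arg (- w) + pi) = f (Arg w)"
        using per[of "Arg w"] by (simp add: Arg_minus algebra_simps)
    qed (use z in auto)
  qed
  then show ?thesis by (simp add: continuous_on_eq_continuous_within)
qed

lemma periodic_eq_comp_Arg_cis:
  assumes per: "\<And>x. f (x + 2 * pi) = f x" and \<theta>: "\<theta> \<in> {-pi..pi}"
  shows "f \<theta> = f (Arg (cis \<theta>))"
proof (cases "\<theta> = - pi")
  case True
  have "cis (- pi) = cis pi" by (simp add: complex_eq_iff)
  then show ?thesis using True per[of "- pi"] Arg_cis[of pi] by simp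
qed (use \<theta> in \<open>simp add: Arg_cis\<close>)

lemma trig_sum_approx:
  assumes cont: "continuous_on UNIV f" and per: "\<And>x. f (x + 2 * pi) = f x" and e: "e > 0"
  obtains F where "\<And>\<theta>. \<theta> \<in> {-pi..pi} \<Longrightarrow> cmod (f \<theta> - trig_sum F \<theta>) < e"
proof -
  obtain p where p: "polynomial_function p" "\<And>z. z \<in> sphere 0 1 \<Longrightarrow> norm (f (Arg z) - p z) < e"
    using Stone_Weierstrass_polynomial_function[OF compact_sphere continuous_on_sphere_comp_Arg[OF cont per] e]
    by blast
  obtain F where F: "(\<lambda>\<theta>. p (cis \<theta>)) = trig_sum F"
    using is_trig_poly_polynomial_function_cis[OF p(1)] unfolding is_trig_poly_def by blast
  show ?thesis
  proof (rule that)
    fix \<theta> :: real assume "\<theta> \<in> {-pi..pi}"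
    then show "cmod (f \<theta> - trig_sum F \<theta>) < e"
      using p(2)[of "cis \<theta>"] periodic_eq_comp_Arg_cis[where f=f, OF per] fun_cong[OF F, of \<theta>] by simp
  qed
qed

subsection \<open>The optimal circulant minus the Toeplitz matrix\<close>

lemma fourier_coeff_add:
  assumes "continuous_on {-pi..pi} p" "continuous_on {-pi..pi} q"
  shows "fourier_coeff (\<lambda>\<theta>. p \<theta> + q \<theta>) k = fourier_coeff p k + fourier_coeff q k"
proof -
  have "integral {-pi..pi} (\<lambda>\<theta>. (p \<theta> + q \<theta>) * fourier_mode (- k) \<theta>) =
      integral {-pi..pi} (\<lambda>\<theta>. p \<theta> * fourier_mode (- k) \<theta>) + integral {-pi..pi} (\<lambda>\<theta>. q \<theta> * fourier_mode (- k) \<theta>)"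
    unfolding distrib_right
    by (rule integral_add) (auto intro!: integrable_continuous_interval continuous_intros assms)
  then show ?thesis unfolding fourier_coeff_eq_integral_fourier_mode by (simp add: add_divide_distrib)
qed

lemma fourier_coeff_trig_sum_banded:
  obtains M :: nat where "\<And>d. \<bar>d\<bar> > int M \<Longrightarrow> fourier_coeff (trig_sum F) d = 0"
proof
  fix d assume d: "\<bar>d\<bar> > int (\<Sum>x\<leftarrow>F. nat \<bar>snd x\<bar>)"
  have "snd x \<noteq> d" if "x \<in> set F" for x
    using member_le_sum_list[of "nat \<bar>snd x\<bar>" "map (\<lambda>x. nat \<bar>snd x\<bar>) F"] that d by auto
  then show "fourier_coeff (trig_sum F) d = 0" by (intro fourier_coeff_trig_sum_eq_0) auto
qed

lemma opt_circ_minus_toeplitz_banded_small: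
  assumes t: "\<And>d. \<bar>d\<bar> > int M \<Longrightarrow> t d = 0" and "\<delta> > 0"
  obtains N where "\<And>n. n > N \<Longrightarrow>
    \<exists>R E. opt_circ n t - toeplitz n t = R + E \<and> rank_one_sum n (2 * M) R \<and> mat_bounded n E \<delta>"
proof
  define C where "C = (\<Sum>d\<in>{-int M..int M}. cmod (t d) * \<bar>d\<bar>)"
  fix n assume n: "n > 2 * M + nat \<lceil>C / \<delta>\<rceil>"
  then have "C / \<delta> \<le> real n" by linarith
  then have "C / real n \<le> \<delta>" using \<open>\<delta> > 0\<close> n by (simp add: field_simps)
  moreover have "(\<Sum>d\<in>{-int M..int M}. cmod (t d) * \<bar>d\<bar> / n) = C / n"
    unfolding C_def by (simp add: sum_divide_distrib)
  moreover obtain R E where "opt_circ n t - toeplitz n t = R + E" "rank_one_sum n (2 * M) R"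
      "mat_bounded n E (\<Sum>d\<in>{-int M..int M}. cmod (t d) * \<bar>d\<bar> / n)"
    using opt_circ_minus_toeplitz_banded[where t=t and M=M and n=n, OF t] n by auto
  ultimately show "\<exists>R E. opt_circ n t - toeplitz n t = R + E \<and> rank_one_sum n (2 * M) R \<and> mat_bounded n E \<delta>"
    by (metis mat_bounded_mono)
qed

lemma mat_bounded_opt_circ_minus_toeplitz:
  assumes "continuous_on {-pi..pi} g" "\<And>\<theta>. \<theta> \<in> {-pi..pi} \<Longrightarrow> cmod (g \<theta>) \<le> \<eta>" "n > 0"
  shows "mat_bounded n (opt_circ n (fourier_coeff g) - toeplitz n (fourier_coeff g)) (\<eta> + \<eta>)"
  using mat_bounded_minus[OF mat_bounded_opt_circ[OF _ assms(3)] mat_bounded_toeplitz[OF assms(1,2)]]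
    mat_bounded_toeplitz[OF assms(1,2)] by blast

lemma opt_circulant_minus_toeplitz_decomp:
  fixes f :: "real \<Rightarrow> complex"
  assumes cont: "continuous_on UNIV f" and periodic: "\<And>x. f (x + 2 * pi) = f x" and "\<delta> > 0"
  obtains M N :: nat where "\<And>n. n > N \<Longrightarrow>
    \<exists>R E. opt_circulant f n - toeplitz_mat f n = R + E \<and> rank_one_sum n (2 * M) R \<and> mat_bounded n E \<delta>"
proof -
  obtain F where F: "\<And>\<theta>. \<theta> \<in> {-pi..pi} \<Longrightarrow> cmod (f \<theta> - trig_sum F \<theta>) < \<delta> / 4"
    using trig_sum_approx[OF cont periodic, of "\<delta> / 4"] \<open>\<delta> > 0\<close> by auto
  define g where "g \<theta> = f \<theta> - trig_sum F \<theta>" for \<theta>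
  have cont_g: "continuous_on {-pi..pi} g"
    unfolding g_def by (intro continuous_intros continuous_on_subset[OF cont]) auto
  have "(\<lambda>\<theta>. trig_sum F \<theta> + g \<theta>) = f" by (simp add: g_def fun_eq_iff)
  then have coeff: "fourier_coeff f = (\<lambda>k. fourier_coeff (trig_sum F) k + fourier_coeff g k)"
    using fourier_coeff_add[OF continuous_on_trig_sum[of _ F] cont_g] by (simp add: fun_eq_iff)
  obtain M where M: "\<And>d. \<bar>d\<bar> > int M \<Longrightarrow> fourier_coeff (trig_sum F) d = 0"
    using fourier_coeff_trig_sum_banded[of F] by blast
  obtain N where N: "\<And>n. n > N \<Longrightarrow> \<exists>R E. opt_circ n (fourier_coeff (trig_sum F)) - toeplitz n (fourier_coeff (trig_sum F))
      = R + E \<and> rank_one_sum n (2 * M) R \<and> mat_bounded n E (\<delta> / 2)"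
    using opt_circ_minus_toeplitz_banded_small[where t="fourier_coeff (trig_sum F)" and M=M and \<delta>="\<delta> / 2", OF M] \<open>\<delta> > 0\<close> by auto
  show ?thesis
  proof (rule that)
    fix n assume "n > N"
    then obtain R E where RE: "opt_circ n (fourier_coeff (trig_sum F)) - toeplitz n (fourier_coeff (trig_sum F)) = R + E"
      "rank_one_sum n (2 * M) R" "mat_bounded n E (\<delta> / 2)"
      using N by blast
    have small_g: "mat_bounded n (opt_circ n (fourier_coeff g) - toeplitz n (fourier_coeff g)) (\<delta> / 4 + \<delta> / 4)"
      using F \<open>n > N\<close> by (intro mat_bounded_opt_circ_minus_toeplitz cont_g) (auto simp: g_def less_imp_le)
    have "opt_circulant f n - toeplitz_mat f n =
        (opt_circ n (fourier_coeff (trig_sum F)) - toeplitz n (fourier_coeff (trig_sum F))) +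
        (opt_circ n (fourier_coeff g) - toeplitz n (fourier_coeff g))"
      unfolding opt_circulant_eq_opt_circ toeplitz_mat_eq_toeplitz coeff opt_circ_add toeplitz_add
      by (intro eq_matI) (auto simp: opt_circ_def toeplitz_def)
    also have "\<dots> = R + (E + (opt_circ n (fourier_coeff g) - toeplitz n (fourier_coeff g)))"
      unfolding RE(1) using rank_one_sum_carrier[OF RE(2)] mat_bounded_carrier[OF RE(3)]
      by (intro eq_matI) (auto simp: opt_circ_def toeplitz_def)
    finally have "opt_circulant f n - toeplitz_mat f n =
        R + (E + (opt_circ n (fourier_coeff g) - toeplitz n (fourier_coeff g)))" .
    moreover from mat_bounded_add[OF RE(3) small_g]
    have "mat_bounded n (E + (opt_circ n (fourier_coeff g) - toeplitz n (fourier_coeff g))) \<delta>" by simp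
    ultimately show "\<exists>R E. opt_circulant f n - toeplitz_mat f n = R + E \<and> rank_one_sum n (2 * M) R \<and> mat_bounded n E \<delta>"
      using RE(2) by blast
  qed
qed

lemma mat_bounded_toeplitz_mat_opt_circulant:
  assumes "continuous_on {-pi..pi} f" "\<And>\<theta>. \<theta> \<in> {-pi..pi} \<Longrightarrow> cmod (f \<theta>) \<le> B" "n > 0"
  shows "mat_bounded n (toeplitz_mat f n) B" "mat_bounded n (opt_circulant f n) B"
  using mat_bounded_toeplitz[OF assms(1,2)] mat_bounded_opt_circ[OF _ assms(3)]
  by (simp_all add: toeplitz_mat_eq_toeplitz opt_circulant_eq_opt_circ)

lemma mat_cos_opt_circulant_minus_toeplitz_decomp:
  fixes f :: "real \<Rightarrow> complex"
  assumes cont: "continuous_on UNIV f" and periodic: "\<And>x. f (x + 2 * pi) = f x" and "\<epsilon> > 0"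
  obtains N r :: nat where "\<And>n. n > N \<Longrightarrow> \<exists>R E.
    mat_cos (opt_circulant f n) - mat_cos (toeplitz_mat f n) = R + E \<and> rank_one_sum n r R \<and> mat_bounded n E \<epsilon>"
proof -
  have cont_I: "continuous_on {-pi..pi} f" using continuous_on_subset[OF cont] by simp
  obtain B where "B > 0" and B: "\<And>\<theta>. \<theta> \<in> {-pi..pi} \<Longrightarrow> cmod (f \<theta>) \<le> B"
    using compact_imp_bounded[OF compact_continuous_image[OF cont_I compact_Icc]] by (auto simp: bounded_pos)
  obtain \<delta> and K :: nat where "\<delta> > 0" and cos_decomp: "\<And>n X Y R E r. mat_bounded n X B \<Longrightarrow> mat_bounded n Y B \<Longrightarrow>
      X - Y = R + E \<Longrightarrow> rank_one_sum n r R \<Longrightarrow> mat_bounded n E \<delta> \<Longrightarrow>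
      \<exists>R' E'. mat_cos X - mat_cos Y = R' + E' \<and> rank_one_sum n (2 * K * K * r) R' \<and> mat_bounded n E' \<epsilon>"
    by (rule mat_cos_perturb[OF \<open>\<epsilon> > 0\<close> less_imp_le[OF \<open>B > 0\<close>]]) blast
  obtain M N where decomp: "\<And>n. n > N \<Longrightarrow> \<exists>R E. opt_circulant f n - toeplitz_mat f n = R + E \<and>
      rank_one_sum n (2 * M) R \<and> mat_bounded n E \<delta>"
    using opt_circulant_minus_toeplitz_decomp[OF cont periodic \<open>\<delta> > 0\<close>] by blast
  show ?thesis
  proof (rule that)
    fix n assume "n > N"
    then obtain R E where RE: "opt_circulant f n - toeplitz_mat f n = R + E"
        "rank_one_sum n (2 * M) R" "mat_bounded n E \<delta>"
      using decomp by blast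
    have "mat_bounded n (opt_circulant f n) B" "mat_bounded n (toeplitz_mat f n) B"
      using mat_bounded_toeplitz_mat_opt_circulant[OF cont_I B] \<open>n > N\<close> by auto
    then show "\<exists>R E. mat_cos (opt_circulant f n) - mat_cos (toeplitz_mat f n) = R + E \<and>
        rank_one_sum n (2 * K * K * (2 * M)) R \<and> mat_bounded n E \<epsilon>"
      using cos_decomp[OF _ _ RE] by blast
  qed
qed

theorem mainTheorem9:
  fixes f :: "real \<Rightarrow> complex"
  assumes cont: "continuous_on UNIV f"
    and periodic: "\<And>x. f (x + 2 * pi) = f x"
  shows "\<forall>\<epsilon>>0. \<exists>N M :: nat. N > 0 \<and> M > 0 \<and>
           (\<forall>n > N. \<exists>R E. R \<in> carrier_mat n n \<and> E \<in> carrier_mat n n \<and>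
              mat_cos (opt_circulant f n) - mat_cos (toeplitz_mat f n) = R + E \<and>
              mat_rank R \<le> 2 * M \<and> spectral_norm E \<le> \<epsilon>)"
proof (intro allI impI)
  fix \<epsilon> :: real assume "\<epsilon> > 0"
  obtain N r where decomp: "\<And>n. n > N \<Longrightarrow> \<exists>R E.
      mat_cos (opt_circulant f n) - mat_cos (toeplitz_mat f n) = R + E \<and> rank_one_sum n r R \<and> mat_bounded n E \<epsilon>"
    using mat_cos_opt_circulant_minus_toeplitz_decomp[OF cont periodic \<open>\<epsilon> > 0\<close>] by blast
  have "\<exists>R E. R \<in> carrier_mat n n \<and> E \<in> carrier_mat n n \<and>
      mat_cos (opt_circulant f n) - mat_cos (toeplitz_mat f n) = R + E \<and>
      mat_rank R \<le> 2 * (r + 1) \<and> spectral_norm E \<le> \<epsilon>" if n: "n > N" for n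
  proof -
    obtain R E where "mat_cos (opt_circulant f n) - mat_cos (toeplitz_mat f n) = R + E"
        and R: "rank_one_sum n r R" and E: "mat_bounded n E \<epsilon>"
      using decomp[OF n] by blast
    moreover have "mat_rank R \<le> 2 * (r + 1)" using mat_rank_le_if_rank_one_sum[OF R] by simp
    ultimately show ?thesis
      using rank_one_sum_carrier[OF R] mat_bounded_carrier[OF E]
        spectral_norm_le_if_mat_bounded[OF E] \<open>\<epsilon> > 0\<close> by auto
  qed
  then show "\<exists>N M :: nat. N > 0 \<and> M > 0 \<and> (\<forall>n > N. \<exists>R E. R \<in> carrier_mat n n \<and> E \<in> carrier_mat n n \<and>
      mat_cos (opt_circulant f n) - mat_cos (toeplitz_mat f n) = R + E \<and>
      mat_rank R \<le> 2 * M \<and> spectral_norm E \<le> \<epsilon>)"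
    by (intro exI[of _ "N + 1"] exI[of _ "r + 1"]) simp
qed

end
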